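(* Let $\mathcal{T}$ be a conforming mesh of the two-dimensional torus by straight triangles, and let $k\ge 0$. Let $\nabla^\perp:\mathbb{P}_{k+1}\to\mathrm{d}\mathbb{P}_k(\mathcal{C})^2$ be the cellwise rotated gradient $\nabla^\perp\psi=(-\partial_y\psi,\partial_x\psi)^T$, and let $\nabla_{\mathscr{D}'}\cdot:\mathrm{d}\mathbb{P}_k(\mathcal{C})^2\to \mathrm{d}\mathbb{P}_{k-1}(\mathcal{C})\times\mathrm{d}\mathbb{P}_k(\mathcal{F})$ be the distributional divergence, $(\nabla_{\mathscr{D}'}\cdot\mathbf{u})|_c=\nabla\cdot(\mathbf{u}|_c)$ for each cell $c$ and $(\nabla_{\mathscr{D}'}\cdot\mathbf{u})|_f=[\![\mathbf{u}\cdot\mathbf{n}_f]\!]$ for each face $f$. If $\mathbb{K}^2$ denotes the two-dimensional space of uniform (constant) vector fields, then $$\ker(\nabla_{\mathscr{D}'}\cdot)=\operatorname{Range}(\nabla^\perp)\oplus\mathbb{K}^2.$$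
   Context: $\mathcal{C}$, $\mathcal{F}$ are the cells and faces (edges) of the mesh. $\mathbb{P}_{k+1}$: continuous functions, polynomial of total degree $\le k+1$ on each triangle. $\mathrm{d}\mathbb{P}_k(\mathcal{C})^2$: discontinuous vector fields, polynomial of total degree $\le k$ componentwise on each cell. $\mathrm{d}\mathbb{P}_{k-1}(\mathcal{C})$: discontinuous cellwise polynomials of degree $\le k-1$ (zero space if $k=0$). $\mathrm{d}\mathbb{P}_k(\mathcal{F})$: collections of polynomials of degree $\le k$, one on each face. Each face $f$ carries a fixed unit normal $\mathbf{n}_f$; the cell into which $\mathbf{n}_f$ points is the right cell $R$, the other the left cell $L$, and $[\![\mathbf{u}\cdot\mathbf{n}_f]\!]=\mathbf{u}_R\cdot\mathbf{n}_f-\mathbf{u}_L\cdot\mathbf{n}_f$. *)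

theory Defs
  imports "HOL-Analysis.Analysis"
begin

text \<open>The torus is the plane modulo the lattice
  generated by two linearly independent period vectors a, b; a mesh of the torus is
  represented by its periodic lift: finitely many triangles whose lattice translates form
  a conforming triangulation of the plane. Fields on the torus are periodic fields on the plane.\<close>

definition det2 :: "real \<times> real \<Rightarrow> real \<times> real \<Rightarrow> real" where
  "det2 p q = fst p * snd q - snd p * fst q"

definition lattice :: "real \<times> real \<Rightarrow> real \<times> real \<Rightarrow> (real \<times> real) set" where
  "lattice a b = {of_int m *\<^sub>R a + of_int n *\<^sub>R b | m n. True}"

definition tri :: "('c \<Rightarrow> nat \<Rightarrow> real \<times> real) \<Rightarrow> 'c \<Rightarrow> (real \<times> real) set" where
  "tri V c = convex hull (V c ` {0,1,2})"

definition cell :: "('c \<Rightarrow> nat \<Rightarrow> real \<times> real) \<Rightarrow> 'c \<Rightarrow> real \<times> real \<Rightarrow> (real \<times> real) set" where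
  "cell V c l = (\<lambda>x. x + l) ` tri V c"

definition verts :: "('c \<Rightarrow> nat \<Rightarrow> real \<times> real) \<Rightarrow> 'c \<Rightarrow> real \<times> real \<Rightarrow> (real \<times> real) set" where
  "verts V c l = (\<lambda>x. x + l) ` V c ` {0,1,2}"

definition torus_mesh :: "real \<times> real \<Rightarrow> real \<times> real \<Rightarrow> ('c \<Rightarrow> nat \<Rightarrow> real \<times> real) \<Rightarrow> bool" where
  "torus_mesh a b V \<longleftrightarrow>
     det2 a b \<noteq> 0 \<and>
     (\<forall>c. det2 (V c 1 - V c 0) (V c 2 - V c 0) \<noteq> 0) \<and>
     (\<Union>c. \<Union>l\<in>lattice a b. cell V c l) = UNIV \<and>
     (\<forall>c c' l l'. l \<in> lattice a b \<and> l' \<in> lattice a b \<and> (c, l) \<noteq> (c', l') \<longrightarrow>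
        (let S = cell V c l \<inter> cell V c' l' in
           S = {} \<or>
           (\<exists>v. v \<in> verts V c l \<and> v \<in> verts V c' l' \<and> S = {v}) \<or>
           (\<exists>v w. v \<noteq> w \<and> v \<in> verts V c l \<and> v \<in> verts V c' l' \<and>
                  w \<in> verts V c l \<and> w \<in> verts V c' l' \<and> S = closed_segment v w)))"

definition poly2 :: "nat \<Rightarrow> (real \<times> real \<Rightarrow> real) \<Rightarrow> bool" where
  "poly2 d p \<longleftrightarrow> (\<exists>a :: nat \<Rightarrow> nat \<Rightarrow> real.
      \<forall>x y. p (x, y) = (\<Sum>i\<le>d. \<Sum>j\<le>d - i. a i j * x ^ i * y ^ j))"

definition dx :: "(real \<times> real \<Rightarrow> real) \<Rightarrow> real \<times> real \<Rightarrow> real" where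
  "dx f z = deriv (\<lambda>t. f (t, snd z)) (fst z)"

definition dy :: "(real \<times> real \<Rightarrow> real) \<Rightarrow> real \<times> real \<Rightarrow> real" where
  "dy f z = deriv (\<lambda>t. f (fst z, t)) (snd z)"

definition rotgrad :: "(real \<times> real \<Rightarrow> real) \<Rightarrow> real \<times> real \<Rightarrow> real \<times> real" where
  "rotgrad f z = (- dy f z, dx f z)"

definition divg :: "(real \<times> real \<Rightarrow> real \<times> real) \<Rightarrow> real \<times> real \<Rightarrow> real" where
  "divg u z = dx (\<lambda>p. fst (u p)) z + dy (\<lambda>p. snd (u p)) z"

definition edge_normal :: "real \<times> real \<Rightarrow> real \<times> real \<Rightarrow> real \<times> real" where
  "edge_normal v w = (1 / norm (w - v)) *\<^sub>R (snd (w - v), - fst (w - v))"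

text \<open>dP_k(C)^2: one polynomial vector field of degree \<le> k per cell
  (on the translate cell V c l the field is x \<mapsto> u c (x - l)).\<close>
definition dPk :: "nat \<Rightarrow> ('c \<Rightarrow> real \<times> real \<Rightarrow> real \<times> real) \<Rightarrow> bool" where
  "dPk k u \<longleftrightarrow> (\<forall>c. poly2 k (\<lambda>z. fst (u c z)) \<and> poly2 k (\<lambda>z. snd (u c z)))"

definition CGspace :: "real \<times> real \<Rightarrow> real \<times> real \<Rightarrow> ('c \<Rightarrow> nat \<Rightarrow> real \<times> real) \<Rightarrow> nat
    \<Rightarrow> (real \<times> real \<Rightarrow> real) \<Rightarrow> bool" where
  "CGspace a b V d \<psi> \<longleftrightarrow> continuous_on UNIV \<psi> \<and>
     (\<forall>l\<in>lattice a b. \<forall>x. \<psi> (x + l) = \<psi> x) \<and>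
     (\<forall>c. \<exists>p. poly2 d p \<and> (\<forall>x\<in>tri V c. \<psi> x = p x))"

definition rotgrad_range :: "real \<times> real \<Rightarrow> real \<times> real \<Rightarrow> ('c \<Rightarrow> nat \<Rightarrow> real \<times> real) \<Rightarrow> nat
    \<Rightarrow> ('c \<Rightarrow> real \<times> real \<Rightarrow> real \<times> real) \<Rightarrow> bool" where
  "rotgrad_range a b V k u \<longleftrightarrow> dPk k u \<and>
     (\<exists>\<psi>. CGspace a b V (k + 1) \<psi> \<and> (\<forall>c. \<forall>x\<in>interior (tri V c). u c x = rotgrad \<psi> x))"

text \<open>Kernel of the distributional divergence: cellwise divergence vanishes, and the
  normal jump vanishes across every face (an edge shared by the cell V c and a translate
  V c' l, including the case c' = c with l \<noteq> 0).\<close>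
definition div_kernel :: "real \<times> real \<Rightarrow> real \<times> real \<Rightarrow> ('c \<Rightarrow> nat \<Rightarrow> real \<times> real) \<Rightarrow> nat
    \<Rightarrow> ('c \<Rightarrow> real \<times> real \<Rightarrow> real \<times> real) \<Rightarrow> bool" where
  "div_kernel a b V k u \<longleftrightarrow> dPk k u \<and>
     (\<forall>c. \<forall>x\<in>interior (tri V c). divg (u c) x = 0) \<and>
     (\<forall>c c' l v w. l \<in> lattice a b \<and> (c, 0) \<noteq> (c', l) \<and> v \<noteq> w \<and>
        tri V c \<inter> cell V c' l = closed_segment v w \<longrightarrow>
        (\<forall>x\<in>closed_segment v w. inner (u c' (x - l)) (edge_normal v w)
                                   - inner (u c x) (edge_normal v w) = 0))"

definition const_field :: "real \<times> real \<Rightarrow> 'c \<Rightarrow> real \<times> real \<Rightarrow> real \<times> real" where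
  "const_field e = (\<lambda>c x. e)"

end

theory Submission
  imports Defs
begin

text \<open>
  A divergence-free polynomial field of degree \<open>k\<close> on a cell is the rotated gradient of a polynomial
  stream function of degree \<open>k + 1\<close>. A vanishing normal jump across an edge says that the stream
  functions of the two cells have the same tangential derivative there, that is, differ by a constant
  along the edge; so near every point they patch together to a continuous local potential. Since the
  flux \<open>J p q\<close> of the field through the segment \<open>[p, q]\<close> is locally a difference of potentials,
  subdividing triangles shows that \<open>J\<close> is additive around every triangle, and \<open>G x = J 0 x\<close> is a
  global continuous, cellwise polynomial potential. It need not be periodic: \<open>G (x + l) - G x\<close> is
  additive in the lattice vector \<open>l\<close>, hence linear, and the rotated gradient of this linear function
  is the constant part \<open>e\<close>. Conversely, rotated gradients of continuous cellwise polynomials have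
  zero divergence and, by continuity along edges, no normal jumps; and if a constant \<open>e\<close> were such a
  rotated gradient of a periodic \<open>\<psi>\<close>, then \<open>\<psi> - det2 \<cdot> e\<close> would be constant, forcing
  \<open>det2 l e = 0\<close> for every lattice vector \<open>l\<close> and hence \<open>e = 0\<close>.
\<close>
section \<open>Bivariate polynomials in coefficient form\<close>

text \<open>Unlike \<open>poly2\<close>, coefficient arrays are indexed by a square, so that partial differentiation
  (\<open>coeffs_dx\<close>, \<open>coeffs_dy\<close>) does not change the index range.\<close>

definition coeff_poly :: "nat \<Rightarrow> (nat \<Rightarrow> nat \<Rightarrow> real) \<Rightarrow> real \<times> real \<Rightarrow> real" where
  "coeff_poly N c z = (\<Sum>i\<le>N. \<Sum>j\<le>N. c i j * fst z ^ i * snd z ^ j)"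

definition coeffs_within :: "nat \<Rightarrow> (nat \<Rightarrow> nat \<Rightarrow> real) \<Rightarrow> bool" where
  "coeffs_within N c \<longleftrightarrow> (\<forall>i j. N < i \<or> N < j \<longrightarrow> c i j = 0)"

definition coeffs_dx :: "(nat \<Rightarrow> nat \<Rightarrow> real) \<Rightarrow> nat \<Rightarrow> nat \<Rightarrow> real" where
  "coeffs_dx c i j = real (Suc i) * c (Suc i) j"

definition coeffs_dy :: "(nat \<Rightarrow> nat \<Rightarrow> real) \<Rightarrow> nat \<Rightarrow> nat \<Rightarrow> real" where
  "coeffs_dy c i j = real (Suc j) * c i (Suc j)"

lemma coeffs_within_dx: "coeffs_within N c \<Longrightarrow> coeffs_within N (coeffs_dx c)"
  by (auto simp: coeffs_within_def coeffs_dx_def)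

lemma coeffs_within_dy: "coeffs_within N c \<Longrightarrow> coeffs_within N (coeffs_dy c)"
  by (auto simp: coeffs_within_def coeffs_dy_def)

lemma coeffs_dx_dy_commute: "coeffs_dx (coeffs_dy c) = coeffs_dy (coeffs_dx c)"
  by (auto simp: coeffs_dx_def coeffs_dy_def fun_eq_iff)

lemma coeffs_within_total_degree:
  "(\<And>i j. d < i + j \<Longrightarrow> c i j = 0) \<Longrightarrow> coeffs_within d c"
  unfolding coeffs_within_def by (metis add_lessD1 add.commute le_add2 le_less_trans not_less)

lemma coeff_poly_add: "coeff_poly N (\<lambda>i j. c i j + d i j) z = coeff_poly N c z + coeff_poly N d z"
  unfolding coeff_poly_def by (simp add: distrib_right sum.distrib)

lemma coeff_poly_diff: "coeff_poly N (\<lambda>i j. c i j - d i j) z = coeff_poly N c z - coeff_poly N d z"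
  unfolding coeff_poly_def by (simp add: left_diff_distrib sum_subtractf)

lemma coeff_poly_uminus: "coeff_poly N (\<lambda>i j. - c i j) z = - coeff_poly N c z"
  unfolding coeff_poly_def by (simp add: sum_negf)

lemma coeff_poly_degree_mono:
  assumes "coeffs_within N c" "N \<le> M"
  shows "coeff_poly M c = coeff_poly N c"
proof
  fix z
  have "(\<Sum>i\<le>M. \<Sum>j\<le>M. c i j * fst z ^ i * snd z ^ j) = (\<Sum>i\<le>M. \<Sum>j\<le>N. c i j * fst z ^ i * snd z ^ j)"
    by (intro sum.cong refl sum.mono_neutral_cong_right) (use assms in \<open>auto simp: coeffs_within_def\<close>)
  also have "\<dots> = (\<Sum>i\<le>N. \<Sum>j\<le>N. c i j * fst z ^ i * snd z ^ j)"
    by (intro sum.mono_neutral_cong_right) (use assms in \<open>auto simp: coeffs_within_def\<close>)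
  finally show "coeff_poly M c z = coeff_poly N c z" unfolding coeff_poly_def .
qed

lemma poly2_obtain_coeffs:
  assumes "poly2 d p"
  obtains c where "\<And>i j. d < i + j \<Longrightarrow> c i j = 0" "coeffs_within d c" "p = coeff_poly d c"
proof -
  obtain a where a: "\<And>x y. p (x, y) = (\<Sum>i\<le>d. \<Sum>j\<le>d - i. a i j * x ^ i * y ^ j)"
    using assms unfolding poly2_def by blast
  define c where "c i j = (if i + j \<le> d then a i j else 0)" for i j
  have "p z = coeff_poly d c z" for z
  proof -
    obtain x y where z: "z = (x, y)" by fastforce
    have "(\<Sum>j\<le>d - i. a i j * x ^ i * y ^ j) = (\<Sum>j\<le>d. c i j * x ^ i * y ^ j)" if "i \<le> d" for i
      by (rule sum.mono_neutral_cong_left) (use that in \<open>auto simp: c_def\<close>)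
    then show ?thesis unfolding z a coeff_poly_def by simp
  qed
  moreover have "c i j = 0" if "d < i + j" for i j
    using that by (simp add: c_def)
  ultimately show ?thesis using that coeffs_within_total_degree by blast
qed

lemma poly2_coeff_poly:
  assumes "\<And>i j. d < i + j \<Longrightarrow> c i j = 0"
  shows "poly2 d (coeff_poly d c)"
  unfolding poly2_def
proof (intro exI allI)
  fix x y
  have "(\<Sum>j\<le>d - i. c i j * x ^ i * y ^ j) = (\<Sum>j\<le>d. c i j * x ^ i * y ^ j)" if "i \<le> d" for i
    by (rule sum.mono_neutral_cong_left) (use that assms in auto)
  then show "coeff_poly d c (x, y) = (\<Sum>i\<le>d. \<Sum>j\<le>d - i. c i j * x ^ i * y ^ j)"
    unfolding coeff_poly_def by simp
qed

lemma poly2_add: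
  assumes "poly2 d p" "poly2 d q"
  shows "poly2 d (\<lambda>x. p x + q x)"
proof -
  obtain a where "\<And>x y. p (x, y) = (\<Sum>i\<le>d. \<Sum>j\<le>d - i. a i j * x ^ i * y ^ j)"
    using assms(1) unfolding poly2_def by blast
  moreover obtain a' where "\<And>x y. q (x, y) = (\<Sum>i\<le>d. \<Sum>j\<le>d - i. a' i j * x ^ i * y ^ j)"
    using assms(2) unfolding poly2_def by blast
  ultimately show ?thesis
    unfolding poly2_def by (intro exI[of _ "\<lambda>i j. a i j + a' i j"]) (simp add: distrib_right sum.distrib)
qed

lemma poly2_monomial:
  assumes "i + j \<le> d"
  shows "poly2 d (\<lambda>x. C * fst x ^ i * snd x ^ j)"
  unfolding poly2_def
proof (intro exI allI)
  fix x y :: real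
  have inner: "(\<Sum>j'\<le>d - i'. (if i' = i \<and> j' = j then C else 0) * x ^ i' * y ^ j')
      = (if i' = i then C * x ^ i * y ^ j else 0)" for i'
  proof (cases "i' = i")
    case True
    have "(\<Sum>j'\<le>d - i. (if j' = j then C else 0) * x ^ i * y ^ j')
        = (\<Sum>j'\<le>d - i. if j' = j then C * x ^ i * y ^ j else 0)"
      by (intro sum.cong) auto
    then show ?thesis using True assms by simp
  qed simp
  show "C * fst (x, y) ^ i * snd (x, y) ^ j
      = (\<Sum>i'\<le>d. \<Sum>j'\<le>d - i'. (if i' = i \<and> j' = j then C else 0) * x ^ i' * y ^ j')"
    unfolding inner using assms by simp
qed

lemma poly2_const: "poly2 d (\<lambda>x. C)"
  using poly2_monomial[of 0 0 d C] by simp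

lemma poly2_det2: "1 \<le> d \<Longrightarrow> poly2 d (\<lambda>x. det2 x e)"
  using poly2_add[OF poly2_monomial[of 1 0 d "snd e"] poly2_monomial[of 0 1 d "- fst e"]]
  by (simp add: det2_def mult.commute)

lemma sum_index_power_shift:
  fixes f :: "nat \<Rightarrow> real"
  assumes "f (Suc N) = 0"
  shows "(\<Sum>i\<le>N. f i * real i * x ^ (i - 1)) = (\<Sum>i\<le>N. real (Suc i) * f (Suc i) * x ^ i)"
proof -
  define g where "g i = f i * real i * x ^ (i - 1)" for i
  have "(\<Sum>i\<le>Suc N. g i) = g 0 + (\<Sum>i\<le>N. g (Suc i))" by (rule sum.atMost_Suc_shift)
  moreover have "(\<Sum>i\<le>Suc N. g i) = (\<Sum>i\<le>N. g i)" using assms by (simp add: g_def)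
  ultimately show ?thesis by (simp add: g_def mult_ac)
qed

lemma has_derivative_coeff_poly:
  assumes "coeffs_within N c"
  shows "(coeff_poly N c has_derivative
           (\<lambda>h. fst h * coeff_poly N (coeffs_dx c) z + snd h * coeff_poly N (coeffs_dy c) z)) (at z)"
proof -
  have monomial: "((\<lambda>w. c i j * fst w ^ i * snd w ^ j) has_derivative
     (\<lambda>h. fst h * (c i j * real i * fst z ^ (i - 1) * snd z ^ j)
        + snd h * (c i j * fst z ^ i * (real j * snd z ^ (j - 1))))) (at z)" for i j
    by (rule derivative_eq_intros refl | simp)+ (simp add: algebra_simps)
  have D: "(coeff_poly N c has_derivative (\<lambda>h. \<Sum>i\<le>N. \<Sum>j\<le>N.
       fst h * (c i j * real i * fst z ^ (i - 1) * snd z ^ j)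
       + snd h * (c i j * fst z ^ i * (real j * snd z ^ (j - 1))))) (at z)"
    unfolding coeff_poly_def[abs_def] by (intro has_derivative_sum monomial)
  have dx: "(\<Sum>i\<le>N. \<Sum>j\<le>N. c i j * real i * fst z ^ (i - 1) * snd z ^ j) = coeff_poly N (coeffs_dx c) z"
  proof -
    have "(\<Sum>i\<le>N. \<Sum>j\<le>N. c i j * real i * fst z ^ (i - 1) * snd z ^ j)
       = (\<Sum>j\<le>N. \<Sum>i\<le>N. (c i j * snd z ^ j) * real i * fst z ^ (i - 1))"
      by (subst sum.swap) (simp add: mult_ac)
    also have "\<dots> = (\<Sum>j\<le>N. \<Sum>i\<le>N. real (Suc i) * (c (Suc i) j * snd z ^ j) * fst z ^ i)"
      by (intro sum.cong refl sum_index_power_shift) (use assms in \<open>simp add: coeffs_within_def\<close>)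
    also have "\<dots> = coeff_poly N (coeffs_dx c) z"
      unfolding coeff_poly_def coeffs_dx_def by (subst sum.swap) (simp add: mult_ac)
    finally show ?thesis .
  qed
  have dy: "(\<Sum>i\<le>N. \<Sum>j\<le>N. c i j * fst z ^ i * (real j * snd z ^ (j - 1))) = coeff_poly N (coeffs_dy c) z"
  proof -
    have "(\<Sum>i\<le>N. \<Sum>j\<le>N. c i j * fst z ^ i * (real j * snd z ^ (j - 1)))
       = (\<Sum>i\<le>N. \<Sum>j\<le>N. (c i j * fst z ^ i) * real j * snd z ^ (j - 1))"
      by (simp add: mult_ac)
    also have "\<dots> = (\<Sum>i\<le>N. \<Sum>j\<le>N. real (Suc j) * (c i (Suc j) * fst z ^ i) * snd z ^ j)"
      by (intro sum.cong refl sum_index_power_shift) (use assms in \<open>simp add: coeffs_within_def\<close>)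
    also have "\<dots> = coeff_poly N (coeffs_dy c) z"
      unfolding coeff_poly_def coeffs_dy_def by (simp add: mult_ac)
    finally show ?thesis .
  qed
  show ?thesis
    by (rule has_derivative_eq_rhs[OF D])
      (simp add: fun_eq_iff sum.distrib sum_distrib_left[symmetric] dx[symmetric] dy[symmetric])
qed

lemma polyfun_eq_0_on_interval:
  fixes c :: "nat \<Rightarrow> real"
  assumes "a < b" "\<And>x. a < x \<Longrightarrow> x < b \<Longrightarrow> (\<Sum>i\<le>n. c i * x ^ i) = 0"
  shows "\<forall>i\<le>n. c i = 0"
proof -
  have "{a<..<b} \<subseteq> {z. (\<Sum>i\<le>n. c i * z ^ i) = 0}" using assms(2) by auto
  then have "infinite {z. (\<Sum>i\<le>n. c i * z ^ i) = 0}"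
    using infinite_Ioo[OF assms(1)] finite_subset by blast
  then show ?thesis using polyfun_finite_roots[of c n] by auto
qed

lemma coeffs_eq_0_if_coeff_poly_vanishes_on_open:
  assumes "open S" "z0 \<in> S" "\<And>z. z \<in> S \<Longrightarrow> coeff_poly N c z = 0"
  shows "\<forall>i\<le>N. \<forall>j\<le>N. c i j = 0"
proof -
  obtain r where r: "r > 0" "ball z0 r \<subseteq> S" using assms(1,2) open_contains_ball by blast
  obtain x0 y0 where z0: "z0 = (x0, y0)" by fastforce
  have in_S: "(x, y) \<in> S" if "\<bar>x - x0\<bar> < r/2" "\<bar>y - y0\<bar> < r/2" for x y
  proof -
    have "dist (x, y) z0 \<le> dist x x0 + dist y y0"
      unfolding z0 dist_Pair_Pair by (rule sqrt_sum_squares_le_sum_abs[of "dist x x0" "dist y y0", simplified])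
    also have "\<dots> < r" using that by (simp add: dist_real_def)
    finally show ?thesis using r(2) by (auto simp: dist_commute)
  qed
  have rows: "\<forall>i\<le>N. (\<Sum>j\<le>N. c i j * y ^ j) = 0" if "\<bar>y - y0\<bar> < r/2" for y
  proof (rule polyfun_eq_0_on_interval[of "x0 - r/2" "x0 + r/2"])
    fix x assume "x0 - r/2 < x" "x < x0 + r/2"
    then have "\<bar>x - x0\<bar> < r/2" by arith
    then have "coeff_poly N c (x, y) = 0" using in_S that assms(3) by blast
    then show "(\<Sum>i\<le>N. (\<Sum>j\<le>N. c i j * y ^ j) * x ^ i) = 0"
      unfolding coeff_poly_def by (simp add: sum_distrib_left mult_ac)
  qed (use r in simp)
  show ?thesis
  proof (intro allI impI)
    fix i j assume ij: "i \<le> N" "j \<le> N"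
    have "\<forall>j\<le>N. c i j = 0"
    proof (rule polyfun_eq_0_on_interval[of "y0 - r/2" "y0 + r/2"])
      fix y assume "y0 - r/2 < y" "y < y0 + r/2"
      then have "\<bar>y - y0\<bar> < r/2" by arith
      then show "(\<Sum>j\<le>N. c i j * y ^ j) = 0" using rows ij by blast
    qed (use r in simp)
    then show "c i j = 0" using ij by blast
  qed
qed

lemma coeff_poly_eq_on_open:
  assumes "coeffs_within N c" "coeffs_within M d" "open S" "z0 \<in> S"
    and "\<And>z. z \<in> S \<Longrightarrow> coeff_poly N c z = coeff_poly M d z"
  shows "coeff_poly N c = coeff_poly M d"
proof -
  define K where "K = max N M"
  have N: "coeff_poly K c = coeff_poly N c" by (rule coeff_poly_degree_mono[OF assms(1)]) (simp add: K_def)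
  have M: "coeff_poly K d = coeff_poly M d" by (rule coeff_poly_degree_mono[OF assms(2)]) (simp add: K_def)
  have "\<forall>i\<le>K. \<forall>j\<le>K. c i j - d i j = 0"
    by (rule coeffs_eq_0_if_coeff_poly_vanishes_on_open[OF assms(3,4)])
      (use assms(5) in \<open>simp add: coeff_poly_diff N M\<close>)
  then have "coeff_poly K (\<lambda>i j. c i j - d i j) z = 0" for z
    by (simp add: coeff_poly_def)
  then show ?thesis by (simp add: fun_eq_iff coeff_poly_diff N M)
qed

section \<open>Partial derivatives and stream functions\<close>

lemma dx_dy_cong_open:
  assumes "open S" "z \<in> S" "\<And>w. w \<in> S \<Longrightarrow> f w = g w"
  shows "dx f z = dx g z" "dy f z = dy g z"
proof -
  have ev: "eventually (\<lambda>w. f w = g w) (nhds z)"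
    using assms eventually_nhds by blast
  have "((\<lambda>t. (t, snd z)) \<longlongrightarrow> z) (nhds (fst z))" "((\<lambda>t. (fst z, t)) \<longlongrightarrow> z) (nhds (snd z))"
    using tendsto_Pair[OF filterlim_ident tendsto_const, of "snd z" "fst z"]
      tendsto_Pair[OF tendsto_const filterlim_ident, of "fst z" "snd z"] by simp_all
  from this[THEN eventually_compose_filterlim[OF ev]]
  have "eventually (\<lambda>t. f (t, snd z) = g (t, snd z)) (nhds (fst z))"
       "eventually (\<lambda>t. f (fst z, t) = g (fst z, t)) (nhds (snd z))" .
  show "dx f z = dx g z" "dy f z = dy g z"
    unfolding dx_def dy_def by (intro deriv_cong_ev refl; fact)+
qed

lemma dx_dy_has_derivative:
  assumes "(f has_derivative (\<lambda>h. fst h * A + snd h * B)) (at z)"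
  shows "dx f z = A" "dy f z = B"
proof -
  have "((\<lambda>t::real. (t, snd z)) has_derivative (\<lambda>h. (h, 0))) (at (fst z))"
       "((\<lambda>t::real. (fst z, t)) has_derivative (\<lambda>h. (0, h))) (at (snd z))"
    by (rule derivative_eq_intros refl | simp)+
  moreover have "(f has_derivative (\<lambda>h. fst h * A + snd h * B)) (at (fst z, snd z))"
    using assms by simp
  ultimately have "((\<lambda>t. f (t, snd z)) has_derivative (\<lambda>h. h * A)) (at (fst z))"
       "((\<lambda>t. f (fst z, t)) has_derivative (\<lambda>h. h * B)) (at (snd z))"
    by (auto dest: has_derivative_compose)
  then show "dx f z = A" "dy f z = B"
    unfolding dx_def dy_def by (simp_all add: has_field_derivative_def mult_commute_abs DERIV_imp_deriv)
qed

lemma rotgrad_has_derivative_det2: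
  "(f has_derivative (\<lambda>h. det2 h w)) (at z) \<Longrightarrow> rotgrad f z = w"
  using dx_dy_has_derivative[of f "snd w" "- fst w" z]
  by (simp add: det2_def rotgrad_def algebra_simps)

lemma dx_coeff_poly: "coeffs_within N c \<Longrightarrow> dx (coeff_poly N c) z = coeff_poly N (coeffs_dx c) z"
  and dy_coeff_poly: "coeffs_within N c \<Longrightarrow> dy (coeff_poly N c) z = coeff_poly N (coeffs_dy c) z"
  using dx_dy_has_derivative[OF has_derivative_coeff_poly] by blast+

lemma has_derivative_coeff_poly_det2:
  assumes "coeffs_within N c"
  shows "(coeff_poly N c has_derivative (\<lambda>h. det2 h (rotgrad (coeff_poly N c) z))) (at z)"
  using has_derivative_coeff_poly[OF assms, of z]
  by (simp add: det2_def rotgrad_def dx_coeff_poly dy_coeff_poly assms)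

lemma dx_dy_coeff_poly_plus_const:
  assumes "coeffs_within N c"
  shows "dx (\<lambda>x. coeff_poly N c x + C) z = coeff_poly N (coeffs_dx c) z"
    "dy (\<lambda>x. coeff_poly N c x + C) z = coeff_poly N (coeffs_dy c) z"
proof -
  have "((\<lambda>x. coeff_poly N c x + C) has_derivative
      (\<lambda>h. fst h * coeff_poly N (coeffs_dx c) z + snd h * coeff_poly N (coeffs_dy c) z)) (at z)"
    using has_derivative_add[OF has_derivative_coeff_poly[OF assms] has_derivative_const[of C]] by simp
  then show "dx (\<lambda>x. coeff_poly N c x + C) z = coeff_poly N (coeffs_dx c) z"
    "dy (\<lambda>x. coeff_poly N c x + C) z = coeff_poly N (coeffs_dy c) z"
    by (rule dx_dy_has_derivative)+
qed

lemma divg_rotgrad_coeff_poly_plus_const: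
  assumes "coeffs_within N c"
  shows "divg (\<lambda>x. rotgrad (coeff_poly N c) x + e) z = 0"
proof -
  have within: "coeffs_within N (\<lambda>i j. - coeffs_dy c i j)"
    using coeffs_within_dy[OF assms] by (simp add: coeffs_within_def)
  have fst_eq: "(\<lambda>x. fst (rotgrad (coeff_poly N c) x + e))
      = (\<lambda>x. coeff_poly N (\<lambda>i j. - coeffs_dy c i j) x + fst e)"
    and snd_eq: "(\<lambda>x. snd (rotgrad (coeff_poly N c) x + e)) = (\<lambda>x. coeff_poly N (coeffs_dx c) x + snd e)"
    by (simp_all add: fun_eq_iff rotgrad_def dx_coeff_poly dy_coeff_poly assms coeff_poly_uminus)
  have "coeffs_dx (\<lambda>i j. - coeffs_dy c i j) = (\<lambda>i j. - coeffs_dy (coeffs_dx c) i j)"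
    by (simp add: fun_eq_iff coeffs_dx_def coeffs_dy_def)
  then show ?thesis
    unfolding divg_def fst_eq snd_eq dx_dy_coeff_poly_plus_const[OF within]
      dx_dy_coeff_poly_plus_const[OF coeffs_within_dx[OF assms]]
    by (simp add: coeff_poly_uminus coeffs_dx_dy_commute)
qed

lemma poly_field_eq_rotgrad_on_open:
  assumes "poly2 k (\<lambda>z. fst (w z))" "poly2 k (\<lambda>z. snd (w z))" "coeffs_within N c"
    and "open S" "z0 \<in> S" "\<And>z. z \<in> S \<Longrightarrow> w z = rotgrad (coeff_poly N c) z"
  shows "w = rotgrad (coeff_poly N c)"
proof -
  obtain c1 where c1: "coeffs_within k c1" "(\<lambda>z. fst (w z)) = coeff_poly k c1"
    using poly2_obtain_coeffs[OF assms(1)] by metis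
  obtain c2 where c2: "coeffs_within k c2" "(\<lambda>z. snd (w z)) = coeff_poly k c2"
    using poly2_obtain_coeffs[OF assms(2)] by metis
  have c1_eq: "coeff_poly k c1 = coeff_poly N (\<lambda>i j. - coeffs_dy c i j)"
  proof (rule coeff_poly_eq_on_open[OF c1(1) _ assms(4,5)])
    show "coeffs_within N (\<lambda>i j. - coeffs_dy c i j)"
      using coeffs_within_dy[OF assms(3)] by (simp add: coeffs_within_def)
    fix z assume "z \<in> S"
    then have "fst (w z) = - dy (coeff_poly N c) z" using assms(6) by (simp add: rotgrad_def)
    then show "coeff_poly k c1 z = coeff_poly N (\<lambda>i j. - coeffs_dy c i j) z"
      using fun_cong[OF c1(2), of z] by (simp add: dy_coeff_poly assms(3) coeff_poly_uminus)
  qed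
  have c2_eq: "coeff_poly k c2 = coeff_poly N (coeffs_dx c)"
  proof (rule coeff_poly_eq_on_open[OF c2(1) coeffs_within_dx[OF assms(3)] assms(4,5)])
    fix z assume "z \<in> S"
    then have "snd (w z) = dx (coeff_poly N c) z" using assms(6) by (simp add: rotgrad_def)
    then show "coeff_poly k c2 z = coeff_poly N (coeffs_dx c) z"
      using fun_cong[OF c2(2), of z] by (simp add: dx_coeff_poly assms(3))
  qed
  show ?thesis
  proof
    fix z
    have "fst (w z) = - dy (coeff_poly N c) z"
      using fun_cong[OF c1(2), of z] fun_cong[OF c1_eq, of z]
      by (simp add: dy_coeff_poly assms(3) coeff_poly_uminus)
    moreover have "snd (w z) = dx (coeff_poly N c) z"
      using fun_cong[OF c2(2), of z] fun_cong[OF c2_eq, of z] by (simp add: dx_coeff_poly assms(3))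
    ultimately show "w z = rotgrad (coeff_poly N c) z" by (simp add: rotgrad_def prod_eq_iff)
  qed
qed

lemma coeffs_stream_function:
  assumes a1: "\<And>i j. k < i + j \<Longrightarrow> a1 i j = 0" and a2: "\<And>i j. k < i + j \<Longrightarrow> a2 i j = 0"
    and div0: "\<And>i j. real (Suc i) * a1 (Suc i) j + real (Suc j) * a2 i (Suc j) = 0"
  obtains c where "\<And>i j. k + 1 < i + j \<Longrightarrow> c i j = 0" "coeffs_dx c = a2" "coeffs_dy c = (\<lambda>i j. - a1 i j)"
proof -
  \<comment> \<open>\<open>coeffs_dx c = a2\<close> fixes the coefficients with \<open>i > 0\<close>, \<open>coeffs_dy c = - a1\<close> those with
      \<open>i = 0\<close>; the two requirements agree because of \<open>div0\<close>\<close>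
  define c where "c i j = (if 0 < i then a2 (i - 1) j / real i
                           else if 0 < j then - a1 0 (j - 1) / real j else 0)" for i j
  have "c i j = 0" if "k + 1 < i + j" for i j
    using that a1[of 0 "j - 1"] a2[of "i - 1" j] by (auto simp: c_def)
  moreover have "coeffs_dx c = a2" by (auto simp: fun_eq_iff coeffs_dx_def c_def)
  moreover have "coeffs_dy c = (\<lambda>i j. - a1 i j)"
  proof (intro ext)
    fix i j
    show "coeffs_dy c i j = - a1 i j"
    proof (cases i)
      case (Suc i')
      then show ?thesis using div0[of i' j]
        by (simp add: coeffs_dy_def c_def field_simps del: of_nat_Suc)
    qed (simp add: coeffs_dy_def c_def)
  qed
  ultimately show ?thesis by (rule that)
qed

lemma divergence_free_poly_field_stream_function:
  assumes "poly2 k (\<lambda>z. fst (w z))" "poly2 k (\<lambda>z. snd (w z))"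
    and "open S" "z0 \<in> S" "\<And>z. z \<in> S \<Longrightarrow> divg w z = 0"
  obtains p where "poly2 (k + 1) p" "\<And>y. (p has_derivative (\<lambda>h. det2 h (w y))) (at y)"
proof -
  obtain a1 where a1: "\<And>i j. k < i + j \<Longrightarrow> a1 i j = 0" "coeffs_within k a1"
      "(\<lambda>z. fst (w z)) = coeff_poly k a1"
    using poly2_obtain_coeffs[OF assms(1)] by metis
  obtain a2 where a2: "\<And>i j. k < i + j \<Longrightarrow> a2 i j = 0" "coeffs_within k a2"
      "(\<lambda>z. snd (w z)) = coeff_poly k a2"
    using poly2_obtain_coeffs[OF assms(2)] by metis
  have "\<forall>i\<le>k. \<forall>j\<le>k. coeffs_dx a1 i j + coeffs_dy a2 i j = 0"
  proof (rule coeffs_eq_0_if_coeff_poly_vanishes_on_open[OF assms(3,4)])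
    fix z assume "z \<in> S"
    then show "coeff_poly k (\<lambda>i j. coeffs_dx a1 i j + coeffs_dy a2 i j) z = 0"
      using assms(5)[of z] a1(3) a2(3)
      by (simp add: divg_def coeff_poly_add dx_coeff_poly dy_coeff_poly a1(2) a2(2))
  qed
  then have div0: "real (Suc i) * a1 (Suc i) j + real (Suc j) * a2 i (Suc j) = 0" for i j
    using a1(1)[of "Suc i" j] a2(1)[of i "Suc j"]
    by (cases "i \<le> k \<and> j \<le> k") (auto simp: coeffs_dx_def coeffs_dy_def)
  obtain c where c: "\<And>i j. k + 1 < i + j \<Longrightarrow> c i j = 0"
    and dx_c: "coeffs_dx c = a2" and dy_c: "coeffs_dy c = (\<lambda>i j. - a1 i j)"
    using coeffs_stream_function[OF a1(1) a2(1) div0] by blast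
  have "w y = (coeff_poly (k + 1) a1 y, coeff_poly (k + 1) a2 y)" for y
    using fun_cong[OF a1(3), of y] fun_cong[OF a2(3), of y] coeff_poly_degree_mono[OF a1(2), of "k + 1"]
      coeff_poly_degree_mono[OF a2(2), of "k + 1"] by (simp add: prod_eq_iff)
  then have "(coeff_poly (k + 1) c has_derivative (\<lambda>h. det2 h (w y))) (at y)" for y
    using has_derivative_coeff_poly[OF coeffs_within_total_degree, of "k + 1" c y] c
    unfolding dx_c dy_c coeff_poly_uminus by (simp add: det2_def)
  moreover have "poly2 (k + 1) (coeff_poly (k + 1) c)"
    using c by (rule poly2_coeff_poly)
  ultimately show ?thesis using that by blast
qed

section \<open>Determinants, triangles, segments and lattices in the plane\<close>

lemma det2_scaleR_left: "det2 (m *\<^sub>R p) q = m * det2 p q"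
  by (simp add: det2_def algebra_simps)

lemma det2_eq_0_independent:
  assumes "det2 A d = 0" "det2 B d = 0" "det2 A B \<noteq> 0"
  shows "d = 0"
proof -
  obtain a1 a2 b1 b2 d1 d2 where AD: "A = (a1, a2)" "B = (b1, b2)" "d = (d1, d2)"
    by (metis prod.exhaust)
  have e: "a1 * d2 - a2 * d1 = 0" "b1 * d2 - b2 * d1 = 0" "a1 * b2 - a2 * b1 \<noteq> 0"
    using assms by (auto simp: det2_def AD)
  have "(a1 * b2 - a2 * b1) * d1 = a1 * (b2 * d1 - b1 * d2) + b1 * (a1 * d2 - a2 * d1)"
       "(a1 * b2 - a2 * b1) * d2 = b2 * (a1 * d2 - a2 * d1) - a2 * (b1 * d2 - b2 * d1)"
    by (simp_all add: algebra_simps)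
  then have "(a1 * b2 - a2 * b1) * d1 = 0" "(a1 * b2 - a2 * b1) * d2 = 0"
    using e(1,2) by simp_all
  then show ?thesis using e(3) by (simp add: AD zero_prod_def)
qed

lemma abs_det2_le: "\<bar>det2 p q\<bar> \<le> norm p * norm q"
proof -
  have "det2 p q = inner p (snd q, - fst q)" by (simp add: det2_def inner_prod_def)
  moreover have "norm (snd q, - fst q) = norm q" by (simp add: norm_prod_def add.commute)
  ultimately show ?thesis using Cauchy_Schwarz_ineq2[of p "(snd q, - fst q)"] by simp
qed

lemma in_convex_hull_3_iff_det2:
  fixes P0 P1 P2 p :: "real \<times> real"
  defines "D \<equiv> det2 (P1 - P0) (P2 - P0)"
  assumes "D \<noteq> 0"
  shows "p \<in> convex hull {P0, P1, P2} \<longleftrightarrow>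
    0 \<le> D * det2 (P2 - P1) (p - P1) \<and> 0 \<le> D * det2 (P0 - P2) (p - P2) \<and> 0 \<le> D * det2 (P1 - P0) (p - P0)"
proof -
  obtain x0 y0 x1 y1 x2 y2 x y where P: "P0 = (x0,y0)" "P1 = (x1,y1)" "P2 = (x2,y2)" "p = (x,y)"
    by (metis prod.exhaust)
  have Dv: "D = (x1 - x0) * (y2 - y0) - (y1 - y0) * (x2 - x0)" by (simp add: D_def det2_def P)
  \<comment> \<open>\<open>e\<^sub>i / D\<close> are the barycentric coordinates of \<open>p\<close>\<close>
  define e0 where "e0 = (x2 - x1) * (y - y1) - (y2 - y1) * (x - x1)"
  define e1 where "e1 = (x0 - x2) * (y - y2) - (y0 - y2) * (x - x2)"
  define e2 where "e2 = (x1 - x0) * (y - y0) - (y1 - y0) * (x - x0)"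
  have E: "det2 (P2 - P1) (p - P1) = e0" "det2 (P0 - P2) (p - P2) = e1" "det2 (P1 - P0) (p - P0) = e2"
    by (simp_all add: det2_def P e0_def e1_def e2_def)
  have sum: "e0 + e1 + e2 = D" unfolding Dv e0_def e1_def e2_def by algebra
  have cx: "e0 * x0 + e1 * x1 + e2 * x2 = D * x" unfolding Dv e0_def e1_def e2_def by algebra
  have cy: "e0 * y0 + e1 * y1 + e2 * y2 = D * y" unfolding Dv e0_def e1_def e2_def by algebra
  show ?thesis
  proof
    assume "p \<in> convex hull {P0, P1, P2}"
    then obtain u v w where uvw: "0 \<le> u" "0 \<le> v" "0 \<le> w" "u + v + w = 1"
        "p = u *\<^sub>R P0 + v *\<^sub>R P1 + w *\<^sub>R P2"
      unfolding convex_hull_3 by blast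
    have xy: "x = u * x0 + v * x1 + w * x2" "y = u * y0 + v * y1 + w * y2" using uvw(5) by (simp_all add: P)
    have u: "u = 1 - v - w" using uvw(4) by simp
    have "e0 = u * D" "e1 = v * D" "e2 = w * D"
      unfolding e0_def e1_def e2_def Dv xy u by algebra+
    then show "0 \<le> D * det2 (P2 - P1) (p - P1) \<and> 0 \<le> D * det2 (P0 - P2) (p - P2) \<and> 0 \<le> D * det2 (P1 - P0) (p - P0)"
      using uvw(1-3) unfolding E by (simp add: mult.left_commute[of D])
  next
    assume signs: "0 \<le> D * det2 (P2 - P1) (p - P1) \<and> 0 \<le> D * det2 (P0 - P2) (p - P2) \<and> 0 \<le> D * det2 (P1 - P0) (p - P0)"
    have nonneg: "0 \<le> e / D" if "0 \<le> D * e" for e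
      using that by (auto simp: zero_le_divide_iff zero_le_mult_iff)
    have "p = (e0 / D) *\<^sub>R P0 + (e1 / D) *\<^sub>R P1 + (e2 / D) *\<^sub>R P2"
      using cx cy assms(2) by (simp add: P field_simps)
    moreover have "e0 / D + e1 / D + e2 / D = 1" using sum assms(2) by (simp add: field_simps)
    moreover have "0 \<le> e0 / D" "0 \<le> e1 / D" "0 \<le> e2 / D" using signs nonneg unfolding E by auto
    ultimately show "p \<in> convex hull {P0, P1, P2}"
      unfolding convex_hull_3 by blast
  qed
qed

lemma interior_convex_hull_3_nonempty:
  fixes P0 P1 P2 :: "real \<times> real"
  defines "D \<equiv> det2 (P1 - P0) (P2 - P0)"
  assumes "D \<noteq> 0"
  obtains x where "x \<in> interior (convex hull {P0, P1, P2})"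
proof -
  define Pos where "Pos = {p. 0 < D * det2 (P2 - P1) (p - P1) \<and> 0 < D * det2 (P0 - P2) (p - P2)
                         \<and> 0 < D * det2 (P1 - P0) (p - P0)}"
  have "open Pos" unfolding Pos_def det2_def
    by (intro open_Collect_conj open_Collect_less continuous_intros)
  moreover have "Pos \<subseteq> convex hull {P0, P1, P2}"
    using in_convex_hull_3_iff_det2[of P1 P0 P2] assms by (auto simp: Pos_def D_def less_imp_le)
  ultimately have interior: "Pos \<subseteq> interior (convex hull {P0, P1, P2})"
    by (rule interior_maximal[rotated])
  define g where "g = (1/3) *\<^sub>R (P0 + P1 + P2)"
  obtain x0 y0 x1 y1 x2 y2 where P: "P0 = (x0,y0)" "P1 = (x1,y1)" "P2 = (x2,y2)" by (metis prod.exhaust)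
  have E: "det2 (P2 - P1) (g - P1) = D / 3" "det2 (P0 - P2) (g - P2) = D / 3" "det2 (P1 - P0) (g - P0) = D / 3"
    by (simp_all add: D_def g_def P det2_def field_simps)
  have "0 < D * (D / 3)" using assms(2) by (cases "D > 0") (auto simp: zero_less_mult_iff)
  then have "g \<in> Pos" unfolding Pos_def mem_Collect_eq E by simp
  then show ?thesis using interior that by blast
qed

lemma in_closed_segment_iff_param:
  "x \<in> closed_segment v w \<longleftrightarrow> (\<exists>s. 0 \<le> s \<and> s \<le> 1 \<and> x = v + s *\<^sub>R (w - v))"
  unfolding in_segment by (simp add: algebra_simps)

lemma inner_edge_normal:
  assumes "v \<noteq> w"
  shows "inner U (edge_normal v w) = - det2 (w - v) U / norm (w - v)"
proof -
  have "norm (w - v) \<noteq> 0" using assms by simp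
  then show ?thesis by (simp add: edge_normal_def inner_prod_def det2_def field_simps)
qed

lemma constant_on_segment_if_tangential_derivative_zero:
  fixes f :: "'a::real_normed_vector \<Rightarrow> real"
  assumes deriv: "\<And>y. y \<in> closed_segment v w \<Longrightarrow> (f has_derivative f' y) (at y)"
    and tangential: "\<And>y. y \<in> closed_segment v w \<Longrightarrow> f' y (w - v) = 0"
    and "x \<in> closed_segment v w" "y \<in> closed_segment v w"
  shows "f x = f y"
proof -
  define g where "g s = v + s *\<^sub>R (w - v)" for s :: real
  have g: "g s \<in> closed_segment v w" if "s \<in> {0..1}" for s
    using that unfolding g_def in_closed_segment_iff_param by auto
  have "\<exists>C. \<forall>s\<in>{0..1}. f (g s) = C"
  proof (rule has_derivative_zero_constant)
    fix s :: real assume s: "s \<in> {0..1}"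
    have "(g has_derivative (\<lambda>h. h *\<^sub>R (w - v))) (at s within {0..1})"
      unfolding g_def by (rule derivative_eq_intros refl | simp)+
    from has_derivative_compose[OF this deriv[OF g[OF s]]]
    show "((\<lambda>s. f (g s)) has_derivative (\<lambda>h. 0)) (at s within {0..1})"
      using tangential[OF g[OF s]] linear_scale[OF has_derivative_linear[OF deriv[OF g[OF s]]]]
      by simp
  qed simp
  then obtain C where "\<And>s. s \<in> {0..1} \<Longrightarrow> f (g s) = C" by blast
  moreover obtain sx sy where "sx \<in> {0..1}" "x = g sx" "sy \<in> {0..1}" "y = g sy"
    using assms(3,4) unfolding g_def in_closed_segment_iff_param by auto
  ultimately show ?thesis by simp
qed

lemma tangential_derivative_zero_if_constant_on_segment:
  fixes f :: "'a::real_normed_vector \<Rightarrow> real"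
  assumes deriv: "(f has_derivative f') (at x)" and x: "x \<in> closed_segment v w"
    and const: "\<And>y. y \<in> closed_segment v w \<Longrightarrow> f y = f x"
  shows "f' (w - v) = 0"
proof -
  define g where "g s = v + s *\<^sub>R (w - v)" for s :: real
  obtain s0 where s0: "s0 \<in> {0..1}" "x = g s0"
    using x unfolding g_def in_closed_segment_iff_param by auto
  have "(g has_derivative (\<lambda>h. h *\<^sub>R (w - v))) (at s0 within {0..1})"
    unfolding g_def by (rule derivative_eq_intros refl | simp)+
  from has_derivative_compose[OF this deriv[unfolded s0(2)]]
  have "((\<lambda>s. f (g s)) has_vector_derivative f' (w - v)) (at s0 within {0..1})"
    using linear_scale[OF has_derivative_linear[OF deriv]]
    by (simp add: has_vector_derivative_def)
  moreover have "((\<lambda>s. f (g s)) has_vector_derivative 0) (at s0 within {0..1})"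
  proof (rule has_vector_derivative_transform_within[OF has_vector_derivative_const zero_less_one s0(1)])
    fix s :: real assume "s \<in> {0..1}"
    then have "g s \<in> closed_segment v w" unfolding g_def in_closed_segment_iff_param by auto
    then show "f x = f (g s)" using const by simp
  qed
  ultimately show ?thesis
    using vector_derivative_unique_within_closed_interval[of 0 1 s0] s0(1) by simp
qed

lemma mem_lattice_iff: "l \<in> lattice a b \<longleftrightarrow> (\<exists>m n. l = of_int m *\<^sub>R a + of_int n *\<^sub>R b)"
  unfolding lattice_def by blast

lemma lattice_basis: "a \<in> lattice a b" "b \<in> lattice a b"
  unfolding mem_lattice_iff by (rule exI[of _ 1], rule exI[of _ 0], simp) (rule exI[of _ 0], rule exI[of _ 1], simp)

lemma zero_in_lattice: "0 \<in> lattice a b"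
  unfolding mem_lattice_iff by (rule exI[of _ 0], rule exI[of _ 0]) simp

lemma lattice_add:
  assumes "l \<in> lattice a b" "l' \<in> lattice a b"
  shows "l + l' \<in> lattice a b"
proof -
  obtain m n m' n' where "l = of_int m *\<^sub>R a + of_int n *\<^sub>R b" "l' = of_int m' *\<^sub>R a + of_int n' *\<^sub>R b"
    using assms unfolding mem_lattice_iff by blast
  then have "l + l' = of_int (m + m') *\<^sub>R a + of_int (n + n') *\<^sub>R b" by (simp add: algebra_simps)
  then show ?thesis unfolding mem_lattice_iff by blast
qed

lemma lattice_scaleR_of_int:
  assumes "l \<in> lattice a b"
  shows "of_int k *\<^sub>R l \<in> lattice a b"
proof -
  obtain m n where "l = of_int m *\<^sub>R a + of_int n *\<^sub>R b"
    using assms unfolding mem_lattice_iff by blast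
  then have "of_int k *\<^sub>R l = of_int (k * m) *\<^sub>R a + of_int (k * n) *\<^sub>R b" by (simp add: algebra_simps)
  then show ?thesis unfolding mem_lattice_iff by blast
qed

lemma lattice_uminus: "l \<in> lattice a b \<Longrightarrow> - l \<in> lattice a b"
  using lattice_scaleR_of_int[of l a b "- 1"] by simp

lemma lattice_diff: "l \<in> lattice a b \<Longrightarrow> l' \<in> lattice a b \<Longrightarrow> l - l' \<in> lattice a b"
  using lattice_add[OF _ lattice_uminus, of l a b l'] by simp

lemma finite_lattice_inter_cball:
  assumes "det2 a b \<noteq> 0"
  shows "finite (lattice a b \<inter> cball 0 B)"
proof -
  define K where "K = ceiling (B * (norm a + norm b) / \<bar>det2 a b\<bar>)"
  have "lattice a b \<inter> cball 0 B \<subseteq> (\<lambda>(m, n). of_int m *\<^sub>R a + of_int n *\<^sub>R b) ` ({-K..K} \<times> {-K..K})"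
  proof
    fix l assume l: "l \<in> lattice a b \<inter> cball 0 B"
    then obtain m n :: int where lmn: "l = of_int m *\<^sub>R a + of_int n *\<^sub>R b"
      using IntD1[OF l] unfolding mem_lattice_iff by blast
    have nl: "norm l \<le> B" using l by simp
    then have B0: "0 \<le> B" using norm_ge_zero[of l] by linarith
    \<comment> \<open>Cramer's rule bounds the coordinates\<close>
    have "\<bar>of_int m * det2 a b\<bar> \<le> B * (norm a + norm b)"
    proof -
      have "det2 l b = of_int m * det2 a b" unfolding lmn by (simp add: det2_def algebra_simps)
      then have "\<bar>of_int m * det2 a b\<bar> \<le> norm l * norm b" using abs_det2_le[of l b] by simp
      also have "\<dots> \<le> B * (norm a + norm b)"
        using nl B0 by (intro mult_mono) auto
      finally show ?thesis .
    qed
    moreover have "\<bar>of_int n * det2 a b\<bar> \<le> B * (norm a + norm b)"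
    proof -
      have "det2 a l = of_int n * det2 a b" unfolding lmn by (simp add: det2_def algebra_simps)
      then have "\<bar>of_int n * det2 a b\<bar> \<le> norm l * norm a" using abs_det2_le[of a l] by (simp add: mult.commute)
      also have "\<dots> \<le> B * (norm a + norm b)"
        using nl B0 by (intro mult_mono) auto
      finally show ?thesis .
    qed
    ultimately have "\<bar>real_of_int m\<bar> \<le> B * (norm a + norm b) / \<bar>det2 a b\<bar>"
        "\<bar>real_of_int n\<bar> \<le> B * (norm a + norm b) / \<bar>det2 a b\<bar>"
      using assms by (simp_all add: abs_mult pos_le_divide_eq)
    then have "\<bar>m\<bar> \<le> K" "\<bar>n\<bar> \<le> K" unfolding K_def by linarith+
    then show "l \<in> (\<lambda>(m, n). of_int m *\<^sub>R a + of_int n *\<^sub>R b) ` ({-K..K} \<times> {-K..K})"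
      using lmn by (intro image_eqI[of _ _ "(m, n)"]) auto
  qed
  then show ?thesis by (rule finite_subset) simp
qed

lemma additive_on_lattice_scaleR_of_int:
  fixes C :: "real \<times> real \<Rightarrow> real"
  assumes add: "\<And>l l'. l \<in> lattice a b \<Longrightarrow> l' \<in> lattice a b \<Longrightarrow> C (l + l') = C l + C l'"
    and l: "l \<in> lattice a b"
  shows "C (of_int m *\<^sub>R l) = of_int m * C l"
proof -
  have C0: "C 0 = 0" using add[OF zero_in_lattice zero_in_lattice] by simp
  have nat: "C (of_nat n *\<^sub>R l) = of_nat n * C l" for n
  proof (induction n)
    case (Suc n)
    have "of_nat n *\<^sub>R l \<in> lattice a b" using lattice_scaleR_of_int[OF l, of "int n"] by simp
    then show ?case using add[of "of_nat n *\<^sub>R l" l] l Suc.IH by (simp add: algebra_simps)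
  qed (simp add: C0)
  have neg: "C (- x) = - C x" if "x \<in> lattice a b" for x
  proof -
    have "C x + C (- x) = 0" using add[OF that lattice_uminus[OF that]] C0 by simp
    then show ?thesis by linarith
  qed
  show ?thesis
  proof (cases "0 \<le> m")
    case True
    then obtain n where "m = int n" using nonneg_int_cases by blast
    then show ?thesis using nat[of n] by simp
  next
    case False
    then obtain n where "m = - int n" by (metis nonpos_int_cases linorder_linear)
    moreover have "of_nat n *\<^sub>R l \<in> lattice a b"
      using lattice_scaleR_of_int[OF l, of "int n"] by simp
    ultimately show ?thesis using nat[of n] neg by simp
  qed
qed

lemma additive_on_lattice_eq_det2:
  assumes "det2 a b \<noteq> 0"
    and add: "\<And>l l'. l \<in> lattice a b \<Longrightarrow> l' \<in> lattice a b \<Longrightarrow> C (l + l') = C l + C l'"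
  obtains e where "\<And>l. l \<in> lattice a b \<Longrightarrow> C l = det2 l e"
proof -
  \<comment> \<open>by Cramer's rule, \<open>e\<close> solves \<open>det2 a e = C a\<close> and \<open>det2 b e = C b\<close>\<close>
  define e where "e = ((fst b * C a - fst a * C b) / det2 a b, (snd b * C a - snd a * C b) / det2 a b)"
  have "det2 a e = (fst a * (snd b * C a - snd a * C b) - snd a * (fst b * C a - fst a * C b)) / det2 a b"
       "det2 b e = (fst b * (snd b * C a - snd a * C b) - snd b * (fst b * C a - fst a * C b)) / det2 a b"
    by (simp_all add: e_def det2_def diff_divide_distrib right_diff_distrib)
  moreover have "fst a * (snd b * C a - snd a * C b) - snd a * (fst b * C a - fst a * C b) = C a * det2 a b"
       "fst b * (snd b * C a - snd a * C b) - snd b * (fst b * C a - fst a * C b) = C b * det2 a b"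
    by (simp_all add: det2_def algebra_simps)
  ultimately have ae: "det2 a e = C a" and be: "det2 b e = C b" using assms(1) by simp_all
  have "C l = det2 l e" if l_in: "l \<in> lattice a b" for l
  proof -
    obtain m n where l: "l = of_int m *\<^sub>R a + of_int n *\<^sub>R b" using l_in unfolding mem_lattice_iff by blast
    have "C l = C (of_int m *\<^sub>R a) + C (of_int n *\<^sub>R b)"
      unfolding l by (intro add lattice_scaleR_of_int lattice_basis)
    also have "\<dots> = of_int m * C a + of_int n * C b"
      using additive_on_lattice_scaleR_of_int[OF add] lattice_basis by simp
    also have "\<dots> = det2 l e"
      unfolding l ae[symmetric] be[symmetric] by (simp add: det2_def algebra_simps)
    finally show ?thesis .
  qed
  then show ?thesis by (rule that)
qed

section \<open>Triangulations of the torus\<close>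

locale torus_triangulation =
  fixes a b :: "real \<times> real" and V :: "'c::finite \<Rightarrow> nat \<Rightarrow> real \<times> real"
  assumes mesh: "torus_mesh a b V"
begin

abbreviation "L \<equiv> lattice a b"

lemma det2_basis_nonzero: "det2 a b \<noteq> 0"
  using mesh by (simp add: torus_mesh_def)

lemma cells_cover: obtains c l where "l \<in> L" "x \<in> cell V c l"
proof -
  have "x \<in> (\<Union>c. \<Union>l\<in>L. cell V c l)" using mesh by (simp add: torus_mesh_def)
  then show ?thesis using that by blast
qed

lemma cells_conforming:
  assumes "l \<in> L" "l' \<in> L" "(c, l) \<noteq> (c', l')"
  shows "cell V c l \<inter> cell V c' l' = {} \<or>
     (\<exists>v. cell V c l \<inter> cell V c' l' = {v}) \<or>
     (\<exists>v w. v \<noteq> w \<and> cell V c l \<inter> cell V c' l' = closed_segment v w)"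
  using conjunct2[OF conjunct2[OF conjunct2[OF mesh[unfolded torus_mesh_def]]], rule_format,
      where c=c and c'=c' and l=l and l'=l', OF conjI[OF assms(1) conjI[OF assms(2) assms(3)]], unfolded Let_def]
  by blast

definition vertex :: "'c \<Rightarrow> real \<times> real \<Rightarrow> nat \<Rightarrow> real \<times> real" where
  "vertex c l i = V c i + l"

definition orientation :: "'c \<Rightarrow> real" where
  "orientation c = det2 (V c 1 - V c 0) (V c 2 - V c 0)"

lemma orientation_nonzero: "orientation c \<noteq> 0"
  using mesh by (simp add: torus_mesh_def orientation_def)

lemma cell_eq_convex_hull: "cell V c l = convex hull {vertex c l 0, vertex c l 1, vertex c l 2}"
proof -
  have "cell V c l = (\<lambda>x. l + x) ` (convex hull {V c 0, V c 1, V c 2})"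
    by (simp add: cell_def tri_def add.commute)
  also have "\<dots> = convex hull ((\<lambda>x. l + x) ` {V c 0, V c 1, V c 2})"
    by (rule convex_hull_translation[symmetric])
  finally show ?thesis by (simp add: vertex_def add.commute)
qed

lemma closed_cell: "closed (cell V c l)"
  unfolding cell_eq_convex_hull by (simp add: compact_imp_closed finite_imp_compact_convex_hull)

lemma convex_cell: "convex (cell V c l)"
  unfolding cell_eq_convex_hull by simp

lemma mem_cell_iff_translate: "x \<in> cell V c l \<longleftrightarrow> x - l \<in> tri V c"
  unfolding cell_def by (auto intro: image_eqI[of _ _ "x - l"])

lemma mem_cell_iff_det2:
  "x \<in> cell V c l \<longleftrightarrow>
    0 \<le> orientation c * det2 (vertex c l 2 - vertex c l 1) (x - vertex c l 1) \<and>
    0 \<le> orientation c * det2 (vertex c l 0 - vertex c l 2) (x - vertex c l 2) \<and>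
    0 \<le> orientation c * det2 (vertex c l 1 - vertex c l 0) (x - vertex c l 0)"
proof -
  have "det2 (vertex c l 1 - vertex c l 0) (vertex c l 2 - vertex c l 0) = orientation c"
    by (simp add: vertex_def orientation_def)
  then show ?thesis
    unfolding cell_eq_convex_hull
    using in_convex_hull_3_iff_det2[of "vertex c l 1" "vertex c l 0" "vertex c l 2" x] orientation_nonzero[of c]
    by (simp add: insert_commute)
qed

lemma interior_tri_nonempty: obtains x where "x \<in> interior (tri V c)"
  using interior_convex_hull_3_nonempty[of "V c 1" "V c 0" "V c 2"] orientation_nonzero[of c]
  by (auto simp: tri_def orientation_def insert_commute)

lemma finite_cells_meeting_cball: "finite {(c, l). l \<in> L \<and> cell V c l \<inter> cball z R \<noteq> {}}"
proof -
  have "bounded (\<Union>c. tri V c)"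
    unfolding tri_def by (intro compact_imp_bounded compact_UN finite_imp_compact_convex_hull) simp_all
  then obtain M where M: "\<And>c x. x \<in> tri V c \<Longrightarrow> norm x \<le> M"
    unfolding bounded_iff by auto
  have "{(c, l). l \<in> L \<and> cell V c l \<inter> cball z R \<noteq> {}} \<subseteq> UNIV \<times> (L \<inter> cball 0 (norm z + R + M))"
  proof (rule subsetI)
    fix p assume "p \<in> {(c, l). l \<in> L \<and> cell V c l \<inter> cball z R \<noteq> {}}"
    then obtain c l x where p: "p = (c, l)" and l: "l \<in> L" and x: "x \<in> cell V c l" "x \<in> cball z R"
      by blast
    have "norm (x - l) \<le> M" using x(1) M mem_cell_iff_translate by blast
    moreover have "norm (x - z) \<le> R" using x(2) by (simp add: dist_norm norm_minus_commute)
    moreover have "norm l \<le> norm (x - l) + norm (x - z) + norm z"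
      using norm_triangle_ineq4[of x "x - l"] norm_triangle_ineq[of "x - z" z] by simp
    ultimately show "p \<in> UNIV \<times> (L \<inter> cball 0 (norm z + R + M))" using l p by simp
  qed
  then show ?thesis by (rule finite_subset) (simp add: finite_lattice_inter_cball det2_basis_nonzero)
qed

lemma finite_cells_containing: "finite {(c, l). l \<in> L \<and> z \<in> cell V c l}"
  by (rule finite_subset[OF _ finite_cells_meeting_cball[of z 0]]) auto

lemma star_neighbourhood:
  obtains r where "r > 0" "\<And>c l. l \<in> L \<Longrightarrow> cell V c l \<inter> ball z r \<noteq> {} \<Longrightarrow> z \<in> cell V c l"
proof -
  define F where "F = {(c, l). l \<in> L \<and> cell V c l \<inter> cball z 1 \<noteq> {} \<and> z \<notin> cell V c l}"
  define T where "T = (\<Union>(c, l)\<in>F. cell V c l)"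
  have "finite F" unfolding F_def by (rule finite_subset[OF _ finite_cells_meeting_cball]) auto
  then have "closed T" unfolding T_def by (intro closed_UN) (auto simp: closed_cell)
  moreover have "z \<notin> T" unfolding T_def F_def by auto
  ultimately obtain \<rho> where \<rho>: "\<rho> > 0" "ball z \<rho> \<subseteq> - T"
    using open_contains_ball[of "- T"] by (auto simp: open_Compl)
  show ?thesis
  proof (rule that[of "min \<rho> 1"])
    fix c l assume l: "l \<in> L" and "cell V c l \<inter> ball z (min \<rho> 1) \<noteq> {}"
    then obtain x where "x \<in> cell V c l" "x \<in> ball z (min \<rho> 1)" by blast
    then have x: "x \<in> cell V c l" "x \<in> ball z \<rho>" "x \<in> cball z 1" by auto
    show "z \<in> cell V c l"
    proof (rule ccontr)
      assume "z \<notin> cell V c l"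
      with l x have "x \<in> T" unfolding T_def F_def by blast
      with x(2) \<rho>(2) show False by blast
    qed
  qed (use \<rho> in simp)
qed

lemma cellwise_constant_imp_constant:
  assumes "\<And>c l x y. l \<in> L \<Longrightarrow> x \<in> cell V c l \<Longrightarrow> y \<in> cell V c l \<Longrightarrow> f x = f y"
  shows "f x = f y"
proof (rule connected_local_const[of UNIV x y f])
  show "\<forall>z\<in>UNIV. eventually (\<lambda>w. f z = f w) (at z within UNIV)"
  proof
    fix z :: "real \<times> real"
    obtain r where r: "r > 0" "\<And>c l. l \<in> L \<Longrightarrow> cell V c l \<inter> ball z r \<noteq> {} \<Longrightarrow> z \<in> cell V c l"
      using star_neighbourhood by blast
    have "f z = f w" if "w \<in> ball z r" for w
    proof -
      obtain c l where "l \<in> L" "w \<in> cell V c l" using cells_cover by blast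
      with r(2) that show ?thesis using assms by blast
    qed
    then show "eventually (\<lambda>w. f z = f w) (at z within UNIV)"
      unfolding eventually_at using r(1) by (auto simp: dist_commute)
  qed
qed auto

end

section \<open>Rotated gradients lie in the kernel of the distributional divergence\<close>

context torus_triangulation
begin

lemma rotgrad_range_obtain_cell_polys:
  assumes "rotgrad_range a b V k v"
  obtains \<psi> cc where "\<And>l x. l \<in> L \<Longrightarrow> \<psi> (x + l) = \<psi> x"
    "\<And>c. coeffs_within (k + 1) (cc c)" "\<And>c x. x \<in> tri V c \<Longrightarrow> \<psi> x = coeff_poly (k + 1) (cc c) x"
    "\<And>c. v c = rotgrad (coeff_poly (k + 1) (cc c))"
proof -
  obtain \<psi> where dPk: "dPk k v" and CG: "CGspace a b V (k + 1) \<psi>"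
    and rg: "\<And>c x. x \<in> interior (tri V c) \<Longrightarrow> v c x = rotgrad \<psi> x"
    using assms unfolding rotgrad_range_def by blast
  have "\<exists>C. coeffs_within (k + 1) C \<and> (\<forall>x\<in>tri V c. \<psi> x = coeff_poly (k + 1) C x)
            \<and> v c = rotgrad (coeff_poly (k + 1) C)" for c
  proof -
    obtain p where "poly2 (k + 1) p" and \<psi>_eq: "\<And>x. x \<in> tri V c \<Longrightarrow> \<psi> x = p x"
      using CG unfolding CGspace_def by blast
    then obtain C where C: "coeffs_within (k + 1) C" "p = coeff_poly (k + 1) C"
      using poly2_obtain_coeffs by metis
    obtain z0 where z0: "z0 \<in> interior (tri V c)" by (rule interior_tri_nonempty)
    have "v c x = rotgrad (coeff_poly (k + 1) C) x" if "x \<in> interior (tri V c)" for x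
      using rg[OF that] dx_dy_cong_open[OF open_interior that, of \<psi> p] \<psi>_eq interior_subset C(2)
      by (auto simp: rotgrad_def)
    moreover have "poly2 k (\<lambda>z. fst (v c z))" "poly2 k (\<lambda>z. snd (v c z))"
      using dPk by (simp_all add: dPk_def)
    ultimately have "v c = rotgrad (coeff_poly (k + 1) C)"
      using poly_field_eq_rotgrad_on_open[OF _ _ C(1) open_interior z0] by blast
    then show ?thesis using C \<psi>_eq by blast
  qed
  then obtain cc where "\<And>c. coeffs_within (k + 1) (cc c) \<and> (\<forall>x\<in>tri V c. \<psi> x = coeff_poly (k + 1) (cc c) x)
      \<and> v c = rotgrad (coeff_poly (k + 1) (cc c))"
    by metis
  then show ?thesis using that[of \<psi> cc] CG unfolding CGspace_def by blast
qed

lemma rotgrad_range_plus_const_in_div_kernel: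
  assumes "rotgrad_range a b V k v"
  shows "div_kernel a b V k (\<lambda>c x. v c x + e)"
proof -
  obtain \<psi> cc where per: "\<And>l x. l \<in> L \<Longrightarrow> \<psi> (x + l) = \<psi> x"
    and cc: "\<And>c. coeffs_within (k + 1) (cc c)" "\<And>c x. x \<in> tri V c \<Longrightarrow> \<psi> x = coeff_poly (k + 1) (cc c) x"
    and v: "\<And>c. v c = rotgrad (coeff_poly (k + 1) (cc c))"
    using rotgrad_range_obtain_cell_polys[OF assms] by metis
  have "dPk k (\<lambda>c x. v c x + e)"
    using assms poly2_add[OF _ poly2_const] by (simp add: rotgrad_range_def dPk_def)
  moreover have "divg (\<lambda>x. v c x + e) x = 0" for c x
    unfolding v by (rule divg_rotgrad_coeff_poly_plus_const[OF cc(1)])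
  moreover have "inner (v c' (x - l) + e) (edge_normal p q) - inner (v c x + e) (edge_normal p q) = 0"
    if l: "l \<in> L" and pq: "p \<noteq> q" and S: "tri V c \<inter> cell V c' l = closed_segment p q"
      and x: "x \<in> closed_segment p q" for c c' l p q x
  proof -
    define f where "f y = coeff_poly (k + 1) (cc c) y - coeff_poly (k + 1) (cc c') (y - l)" for y
    have "((\<lambda>y. y - l) has_derivative (\<lambda>h. h)) (at x)" by (auto intro!: derivative_eq_intros)
    from has_derivative_diff[OF has_derivative_coeff_poly_det2[OF cc(1)]
        has_derivative_compose[OF this has_derivative_coeff_poly_det2[OF cc(1)]]]
    have "(f has_derivative (\<lambda>h. det2 h (v c x) - det2 h (v c' (x - l)))) (at x)"
      unfolding f_def v by simp
    \<comment> \<open>both polynomials agree with \<open>\<psi>\<close> on the common edge\<close>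
    moreover have f0: "f y = 0" if "y \<in> closed_segment p q" for y
    proof -
      have "y \<in> tri V c" "y - l \<in> tri V c'" using that S mem_cell_iff_translate by blast+
      then show ?thesis using cc(2) per[OF l, of "y - l"] unfolding f_def by simp
    qed
    then have "f y = f x" if "y \<in> closed_segment p q" for y
      using that x by simp
    ultimately have "det2 (q - p) (v c x) - det2 (q - p) (v c' (x - l)) = 0"
      by (rule tangential_derivative_zero_if_constant_on_segment[OF _ x])
    then show ?thesis using pq by (simp add: inner_add_left inner_edge_normal diff_divide_distrib)
  qed
  ultimately show ?thesis unfolding div_kernel_def by blast
qed

lemma const_field_in_rotgrad_range_eq_0:
  assumes "rotgrad_range a b V k (const_field e)"
  shows "e = 0"
proof -
  obtain \<psi> cc where per: "\<And>l x. l \<in> L \<Longrightarrow> \<psi> (x + l) = \<psi> x"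
    and cc: "\<And>c. coeffs_within (k + 1) (cc c)" "\<And>c x. x \<in> tri V c \<Longrightarrow> \<psi> x = coeff_poly (k + 1) (cc c) x"
    and e: "\<And>c. const_field e c = rotgrad (coeff_poly (k + 1) (cc c))"
    using rotgrad_range_obtain_cell_polys[OF assms] by metis
  \<comment> \<open>\<open>\<psi> - det2 \<cdot> e\<close> is constant on every cell, hence everywhere, but \<open>\<psi>\<close> is periodic\<close>
  have "\<exists>C. \<forall>x. coeff_poly (k + 1) (cc c) x - det2 x e = C" for c
  proof (rule has_derivative_zero_constant[of UNIV, simplified])
    fix x
    have "rotgrad (coeff_poly (k + 1) (cc c)) x = e"
      using fun_cong[OF e[of c], of x] by (simp add: const_field_def)
    then have "(coeff_poly (k + 1) (cc c) has_derivative (\<lambda>h. det2 h e)) (at x)"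
      using has_derivative_coeff_poly_det2[OF cc(1), of c x] by simp
    moreover have "((\<lambda>x. det2 x e) has_derivative (\<lambda>h. det2 h e)) (at x)"
      unfolding det2_def by (auto intro!: derivative_eq_intros)
    ultimately show "((\<lambda>x. coeff_poly (k + 1) (cc c) x - det2 x e) has_derivative (\<lambda>h. 0)) (at x)"
      using has_derivative_diff by fastforce
  qed
  then obtain C where C: "\<And>c x. coeff_poly (k + 1) (cc c) x - det2 x e = C c" by metis
  have const: "\<psi> x - det2 x e = \<psi> y - det2 y e" for x y
  proof (rule cellwise_constant_imp_constant)
    fix c l x y assume l: "l \<in> L" and "x \<in> cell V c l" "y \<in> cell V c l"
    moreover have "\<psi> z - det2 z e = C c - det2 l e" if "z \<in> cell V c l" for z
      using that per[OF l, of "z - l"] cc(2) C[of c "z - l"] mem_cell_iff_translate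
      by (simp add: det2_def algebra_simps)
    ultimately show "\<psi> x - det2 x e = \<psi> y - det2 y e" by simp
  qed
  have "det2 l e = 0" if "l \<in> L" for l
    using const[of l 0] per[OF that, of 0] by (simp add: det2_def)
  then show ?thesis using det2_eq_0_independent det2_basis_nonzero lattice_basis by blast
qed

end

section \<open>Segment functionals that are locally exact\<close>

definition triangle_sum :: "('a \<Rightarrow> 'a \<Rightarrow> real) \<Rightarrow> 'a \<Rightarrow> 'a \<Rightarrow> 'a \<Rightarrow> real" where
  "triangle_sum J p q r = J p q + J q r + J r p"

lemma triangle_sum_midpoint_split:
  fixes J :: "'a::real_vector \<Rightarrow> 'a \<Rightarrow> real"
  assumes swap: "\<And>p q. J q p = - J p q"
    and midpoint: "\<And>p q. J p q = J p (midpoint p q) + J (midpoint p q) q"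
  shows "triangle_sum J p q r =
      triangle_sum J p (midpoint p q) (midpoint r p) + triangle_sum J (midpoint p q) q (midpoint q r)
    + triangle_sum J (midpoint r p) (midpoint q r) r + triangle_sum J (midpoint p q) (midpoint q r) (midpoint r p)"
  using midpoint[of p q] midpoint[of q r] midpoint[of r p]
    swap[of "midpoint p q" "midpoint r p"] swap[of "midpoint q r" "midpoint p q"]
    swap[of "midpoint r p" "midpoint q r"]
  unfolding triangle_sum_def by linarith

lemma dist_midpoint_midpoint:
  fixes a b c :: "'a::real_normed_vector"
  shows "dist (midpoint a b) (midpoint a c) = dist b c / 2"
proof -
  have "midpoint a b - midpoint a c = (1/2) *\<^sub>R (b - c)"
    by (simp add: midpoint_def algebra_simps)
  then show ?thesis by (simp add: dist_norm)
qed

lemma triangle_sum_zero_by_subdivision: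
  fixes J :: "'a::real_normed_vector \<Rightarrow> 'a \<Rightarrow> real"
  assumes swap: "\<And>p q. J q p = - J p q"
    and midpoint: "\<And>p q. J p q = J p (midpoint p q) + J (midpoint p q) q"
    and "convex K"
    and small: "\<And>p q r. p \<in> K \<Longrightarrow> q \<in> K \<Longrightarrow> r \<in> K \<Longrightarrow>
                  dist p q < \<epsilon> \<Longrightarrow> dist q r < \<epsilon> \<Longrightarrow> dist r p < \<epsilon> \<Longrightarrow> triangle_sum J p q r = 0"
  shows "p \<in> K \<Longrightarrow> q \<in> K \<Longrightarrow> r \<in> K \<Longrightarrow> dist p q < \<epsilon> * 2 ^ n \<Longrightarrow> dist q r < \<epsilon> * 2 ^ n \<Longrightarrow>
           dist r p < \<epsilon> * 2 ^ n \<Longrightarrow> triangle_sum J p q r = 0"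
proof (induction n arbitrary: p q r)
  case 0
  then show ?case using small by simp
next
  case (Suc n)
  have mid_K: "midpoint x y \<in> K" if "x \<in> K" "y \<in> K" for x y
    using convexD[OF \<open>convex K\<close> that, of "1/2" "1/2"] by (simp add: midpoint_def scaleR_right_distrib)
  define m1 m2 m3 where "m1 = midpoint p q" and "m2 = midpoint q r" and "m3 = midpoint r p"
  have K: "p \<in> K" "q \<in> K" "r \<in> K" "m1 \<in> K" "m2 \<in> K" "m3 \<in> K"
    using Suc.prems(1-3) mid_K by (simp_all add: m1_def m2_def m3_def)
  have "dist m1 m2 = dist p r / 2" "dist m2 m3 = dist q p / 2" "dist m3 m1 = dist r q / 2"
    unfolding m1_def m2_def m3_def
    by (metis dist_midpoint_midpoint midpoint_sym)+
  moreover have "dist p m1 = dist p q / 2" "dist m1 q = dist p q / 2" "dist q m2 = dist q r / 2"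
    "dist m2 r = dist q r / 2" "dist r m3 = dist r p / 2" "dist m3 p = dist r p / 2"
    unfolding m1_def m2_def m3_def by (simp_all add: dist_midpoint)
  ultimately have "dist x y < \<epsilon> * 2 ^ n \<and> dist y x < \<epsilon> * 2 ^ n"
    if "(x, y) \<in> {(m1, m2), (m2, m3), (m3, m1), (p, m1), (m1, q), (q, m2), (m2, r), (r, m3), (m3, p)}" for x y
    using that Suc.prems(4-6) by (auto simp: dist_commute)
  then have "triangle_sum J p m1 m3 = 0" "triangle_sum J m1 q m2 = 0"
    "triangle_sum J m3 m2 r = 0" "triangle_sum J m1 m2 m3 = 0"
    using K by (simp_all add: Suc.IH)
  then show ?case
    using triangle_sum_midpoint_split[OF swap midpoint, of p q r] by (simp add: m1_def m2_def m3_def)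
qed

lemma locally_exact_segment_functional:
  fixes J :: "'a::{real_normed_vector, heine_borel} \<Rightarrow> 'a \<Rightarrow> real"
  assumes swap: "\<And>p q. J q p = - J p q"
    and midpoint: "\<And>p q. J p q = J p (midpoint p q) + J (midpoint p q) q"
    and local: "\<And>z. \<exists>r>0. \<exists>\<Phi>. \<forall>p\<in>ball z r. \<forall>q\<in>ball z r. J p q = \<Phi> q - \<Phi> p"
  shows "J p q = J 0 q - J 0 p"
proof -
  obtain r \<Phi> where r: "\<And>z. r z > 0" and \<Phi>: "\<And>z p q. p \<in> ball z (r z) \<Longrightarrow> q \<in> ball z (r z) \<Longrightarrow> J p q = \<Phi> z q - \<Phi> z p"
    using local by metis
  define R where "R = norm p + norm q + 1"
  define K where "K = cball (0::'a) R"
  obtain \<epsilon> where \<epsilon>: "\<epsilon> > 0" "\<And>x. x \<in> K \<Longrightarrow> \<exists>G \<in> range (\<lambda>z. ball z (r z)). ball x \<epsilon> \<subseteq> G"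
  proof (rule Heine_Borel_lemma[of K "range (\<lambda>z. ball z (r z))"])
    show "K \<subseteq> \<Union> (range (\<lambda>z. ball z (r z)))"
    proof
      fix x show "x \<in> \<Union> (range (\<lambda>z. ball z (r z)))" using r[of x] by (intro UN_I[of x]) auto
    qed
  qed (auto simp: K_def)
  \<comment> \<open>\<open>\<epsilon>\<close> is a Lebesgue number for the cover of \<open>K\<close> by balls on which \<open>J\<close> is exact\<close>
  have small: "triangle_sum J x y w = 0"
    if xK: "x \<in> K" and "y \<in> K" "w \<in> K" and xy: "dist x y < \<epsilon>" and "dist y w < \<epsilon>"
      and wx: "dist w x < \<epsilon>" for x y w
  proof -
    obtain z where z: "ball x \<epsilon> \<subseteq> ball z (r z)" using \<epsilon>(2)[OF xK] by blast
    have "x \<in> ball x \<epsilon>" "y \<in> ball x \<epsilon>" "w \<in> ball x \<epsilon>" using xy wx \<epsilon>(1) by (auto simp: dist_commute)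
    then have "x \<in> ball z (r z)" "y \<in> ball z (r z)" "w \<in> ball z (r z)" using z by blast+
    then show ?thesis unfolding triangle_sum_def using \<Phi>[of x z y] \<Phi>[of y z w] \<Phi>[of w z x] by simp
  qed
  obtain n where "R / \<epsilon> < 2 ^ n" using real_arch_pow[of 2 "R / \<epsilon>"] by auto
  then have n: "R < \<epsilon> * 2 ^ n" using \<epsilon>(1) by (simp add: field_simps)
  have "dist 0 p < R" "dist p q < R" "dist q 0 < R"
    unfolding R_def dist_norm using norm_triangle_ineq4[of p q] by (simp_all add: add_nonneg_pos)
  then have "triangle_sum J 0 p q = 0"
  proof (intro triangle_sum_zero_by_subdivision[OF swap midpoint _ small, where n=n])
    show "convex K" "0 \<in> K" "p \<in> K" "q \<in> K" unfolding K_def R_def by simp_all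
  qed (use n in auto)
  then show ?thesis using swap[of 0 q] unfolding triangle_sum_def by simp
qed

section \<open>Fields in the kernel are rotated gradients up to a constant\<close>

lemma eventually_nonneg_affine:
  fixes A B t :: real
  assumes "(B = 0 \<and> 0 \<le> A) \<or> 0 < A"
  obtains e where "e > 0" "\<And>s. \<bar>s - t\<bar> < e \<Longrightarrow> 0 \<le> A + (s - t) * B"
proof (cases "B = 0")
  case True
  then show ?thesis using assms that[of 1] by auto
next
  case False
  then have A: "0 < A" using assms by auto
  show ?thesis
  proof (rule that[of "A / \<bar>B\<bar>"])
    fix s assume "\<bar>s - t\<bar> < A / \<bar>B\<bar>"
    then have "\<bar>s - t\<bar> * \<bar>B\<bar> < A" using False by (simp add: field_simps)
    moreover have "- ((s - t) * B) \<le> \<bar>s - t\<bar> * \<bar>B\<bar>" by (simp add: abs_mult[symmetric])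
    ultimately show "0 \<le> A + (s - t) * B" by linarith
  qed (use A False in simp)
qed

lemma has_integral_affine_substitution:
  fixes f :: "real \<Rightarrow> real"
  assumes "(f has_integral I) {\<alpha>..\<beta>}" "0 < m"
  shows "((\<lambda>x. m * f (m * x + c)) has_integral I) {(\<alpha> - c) / m..(\<beta> - c) / m}"
proof -
  have "((\<lambda>x. f (m * x + c)) has_integral (I / m)) {(\<alpha> - c) / m..(\<beta> - c) / m}"
    using has_integral_affinity_iff[OF assms(2), of f c I \<alpha> \<beta>] assms(1)
    by (simp add: divide_inverse_commute)
  from has_integral_mult_right[OF this, of m] show ?thesis using assms(2) by simp
qed

locale torus_div_kernel_field = torus_triangulation a b V
  for a b and V :: "'c::finite \<Rightarrow> nat \<Rightarrow> real \<times> real" +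
  fixes k :: nat and u :: "'c \<Rightarrow> real \<times> real \<Rightarrow> real \<times> real"
  assumes div_kernel: "div_kernel a b V k u"
begin

lemma normal_jump_zero:
  assumes "l \<in> L" "(c, 0) \<noteq> (c', l)" "v \<noteq> w" "tri V c \<inter> cell V c' l = closed_segment v w"
    and "x \<in> closed_segment v w"
  shows "inner (u c' (x - l)) (edge_normal v w) - inner (u c x) (edge_normal v w) = 0"
  using div_kernel assms unfolding div_kernel_def by blast

lemma stream_exists: "\<exists>p. poly2 (k + 1) p \<and> (\<forall>y. (p has_derivative (\<lambda>h. det2 h (u c y))) (at y))"
proof -
  obtain z0 where z0: "z0 \<in> interior (tri V c)" by (rule interior_tri_nonempty)
  have "poly2 k (\<lambda>z. fst (u c z))" "poly2 k (\<lambda>z. snd (u c z))"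
    using div_kernel by (simp_all add: div_kernel_def dPk_def)
  from divergence_free_poly_field_stream_function[OF this open_interior z0] div_kernel
  show ?thesis unfolding div_kernel_def by metis
qed

definition stream :: "'c \<Rightarrow> real \<times> real \<Rightarrow> real" where
  "stream c = (SOME p. poly2 (k + 1) p \<and> (\<forall>y. (p has_derivative (\<lambda>h. det2 h (u c y))) (at y)))"

lemma poly2_stream: "poly2 (k + 1) (stream c)"
  and has_derivative_stream: "(stream c has_derivative (\<lambda>h. det2 h (u c y))) (at y)"
  using someI_ex[OF stream_exists[of c]] unfolding stream_def[symmetric] by blast+

definition cell_stream :: "'c \<Rightarrow> real \<times> real \<Rightarrow> real \<times> real \<Rightarrow> real" where
  "cell_stream c l x = stream c (x - l)"

lemma has_derivative_cell_stream:
  "(cell_stream c l has_derivative (\<lambda>h. det2 h (u c (x - l)))) (at x)"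
proof -
  have "((\<lambda>x. x - l) has_derivative (\<lambda>h. h)) (at x)" by (auto intro!: derivative_eq_intros)
  from has_derivative_compose[OF this has_derivative_stream[of c "x - l"]] show ?thesis
    by (simp add: cell_stream_def[abs_def])
qed

lemma continuous_on_cell_stream: "continuous_on S (cell_stream c l)"
  using has_derivative_continuous[OF has_derivative_cell_stream]
  by (blast intro: continuous_at_imp_continuous_on)

lemma tangential_field_continuous_across_edge:
  assumes l: "l \<in> L" "l' \<in> L" and ne: "(c, l) \<noteq> (c', l')" and vw: "v \<noteq> w"
    and S: "cell V c l \<inter> cell V c' l' = closed_segment v w" and y: "y \<in> closed_segment v w"
  shows "det2 (w - v) (u c (y - l)) = det2 (w - v) (u c' (y - l'))"
proof -
  \<comment> \<open>translate the edge so that it bounds the untranslated cell \<open>c\<close>, as in \<open>div_kernel\<close>\<close>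
  have translate: "x \<in> closed_segment (v - l) (w - l) \<longleftrightarrow> x + l \<in> closed_segment v w" for x
    unfolding in_closed_segment_iff_param by (auto simp: algebra_simps)
  have S': "tri V c \<inter> cell V c' (l' - l) = closed_segment (v - l) (w - l)"
  proof (intro set_eqI)
    fix x
    have "x \<in> tri V c \<longleftrightarrow> x + l \<in> cell V c l" "x \<in> cell V c' (l' - l) \<longleftrightarrow> x + l \<in> cell V c' l'"
      by (simp_all add: mem_cell_iff_translate algebra_simps)
    then show "x \<in> tri V c \<inter> cell V c' (l' - l) \<longleftrightarrow> x \<in> closed_segment (v - l) (w - l)"
      using S translate by blast
  qed
  have "y - l \<in> closed_segment (v - l) (w - l)" using y translate by simp
  moreover have "(c, 0) \<noteq> (c', l' - l)" "v - l \<noteq> w - l" using ne vw by auto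
  ultimately have "inner (u c' (y - l - (l' - l))) (edge_normal (v - l) (w - l))
      - inner (u c (y - l)) (edge_normal (v - l) (w - l)) = 0"
    by (intro normal_jump_zero[OF lattice_diff[OF l(2) l(1)] _ _ S'])
  moreover have "y - l - (l' - l) = y - l'" by simp
  moreover have "edge_normal (v - l) (w - l) = edge_normal v w" by (simp add: edge_normal_def)
  ultimately show ?thesis using vw by (simp add: inner_edge_normal field_simps)
qed

lemma cell_stream_increment_shared:
  assumes l: "l \<in> L" "l' \<in> L" and x: "x \<in> cell V c l" "x \<in> cell V c' l'"
    and y: "y \<in> cell V c l" "y \<in> cell V c' l'"
  shows "cell_stream c l x - cell_stream c l y = cell_stream c' l' x - cell_stream c' l' y"
proof (cases "(c, l) = (c', l')")
  case False
  from cells_conforming[OF l False] show ?thesis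
  proof (elim disjE exE conjE)
    assume "cell V c l \<inter> cell V c' l' = {}" then show ?thesis using x by blast
  next
    fix v assume "cell V c l \<inter> cell V c' l' = {v}"
    then have "x = y" using x y by (metis IntI singletonD)
    then show ?thesis by simp
  next
    fix v w assume vw: "v \<noteq> w" and S: "cell V c l \<inter> cell V c' l' = closed_segment v w"
    have "cell_stream c l x - cell_stream c' l' x = cell_stream c l y - cell_stream c' l' y"
    proof (rule constant_on_segment_if_tangential_derivative_zero
        [where f = "\<lambda>z. cell_stream c l z - cell_stream c' l' z"])
      fix z assume "z \<in> closed_segment v w"
      show "((\<lambda>z. cell_stream c l z - cell_stream c' l' z) has_derivative
          (\<lambda>h. det2 h (u c (z - l)) - det2 h (u c' (z - l')))) (at z)"
        by (intro has_derivative_diff has_derivative_cell_stream)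
      show "det2 (w - v) (u c (z - l)) - det2 (w - v) (u c' (z - l')) = 0"
        using tangential_field_continuous_across_edge[OF l False vw S \<open>z \<in> _\<close>] by simp
    qed (use x y S in blast)+
    then show ?thesis by simp
  qed
qed simp

definition star_radius :: "real \<times> real \<Rightarrow> real" where
  "star_radius z = (SOME r. r > 0 \<and> (\<forall>c l. l \<in> L \<longrightarrow> cell V c l \<inter> ball z r \<noteq> {} \<longrightarrow> z \<in> cell V c l))"

lemma star_radius_pos: "star_radius z > 0"
  and star_radius: "l \<in> L \<Longrightarrow> x \<in> cell V c l \<Longrightarrow> x \<in> ball z (star_radius z) \<Longrightarrow> z \<in> cell V c l"
proof -
  have "\<exists>r. r > 0 \<and> (\<forall>c l. l \<in> L \<longrightarrow> cell V c l \<inter> ball z r \<noteq> {} \<longrightarrow> z \<in> cell V c l)"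
    using star_neighbourhood[of z] by metis
  from someI_ex[OF this] show "star_radius z > 0"
    and "l \<in> L \<Longrightarrow> x \<in> cell V c l \<Longrightarrow> x \<in> ball z (star_radius z) \<Longrightarrow> z \<in> cell V c l"
    unfolding star_radius_def[symmetric] by blast+
qed

text \<open>On the star neighbourhood of \<open>z\<close> the cell streams patch together; by
  \<open>cell_stream_increment_shared\<close> the cell picked by \<open>SOME\<close> does not matter.\<close>

definition local_potential :: "real \<times> real \<Rightarrow> real \<times> real \<Rightarrow> real" where
  "local_potential z x = (let p = SOME p. snd p \<in> L \<and> z \<in> cell V (fst p) (snd p) \<and> x \<in> cell V (fst p) (snd p)
                          in cell_stream (fst p) (snd p) x - cell_stream (fst p) (snd p) z)"

lemma local_potential_eq:
  assumes "l \<in> L" "z \<in> cell V c l" "x \<in> cell V c l"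
  shows "local_potential z x = cell_stream c l x - cell_stream c l z"
proof -
  define p where "p = (SOME p. snd p \<in> L \<and> z \<in> cell V (fst p) (snd p) \<and> x \<in> cell V (fst p) (snd p))"
  have "\<exists>p. snd p \<in> L \<and> z \<in> cell V (fst p) (snd p) \<and> x \<in> cell V (fst p) (snd p)"
    using assms by (intro exI[of _ "(c, l)"]) simp
  from someI_ex[OF this] have p: "snd p \<in> L" "z \<in> cell V (fst p) (snd p)" "x \<in> cell V (fst p) (snd p)"
    unfolding p_def[symmetric] by auto
  have "local_potential z x = cell_stream (fst p) (snd p) x - cell_stream (fst p) (snd p) z"
    unfolding local_potential_def p_def Let_def ..
  also have "\<dots> = cell_stream c l x - cell_stream c l z"
    using cell_stream_increment_shared[OF p(1) assms(1) p(3) assms(3) p(2) assms(2)] .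
  finally show ?thesis .
qed

lemma continuous_on_local_potential: "continuous_on (ball z (star_radius z)) (local_potential z)"
proof -
  define F where "F = {(c, l). l \<in> L \<and> z \<in> cell V c l}"
  have "continuous_on (\<Union>p\<in>F. cell V (fst p) (snd p)) (local_potential z)"
  proof (rule continuous_on_closed_Union)
    show "finite F" unfolding F_def by (rule finite_cells_containing)
  next
    fix p assume "p \<in> F"
    then have p: "snd p \<in> L" "z \<in> cell V (fst p) (snd p)" by (auto simp: F_def)
    show "closed (cell V (fst p) (snd p))" by (rule closed_cell)
    have "continuous_on (cell V (fst p) (snd p)) (\<lambda>x. cell_stream (fst p) (snd p) x - cell_stream (fst p) (snd p) z)"
      by (intro continuous_on_diff continuous_on_cell_stream continuous_on_const)
    then show "continuous_on (cell V (fst p) (snd p)) (local_potential z)"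
      by (rule continuous_on_eq) (use local_potential_eq[OF p] in simp)
  qed
  moreover have "ball z (star_radius z) \<subseteq> (\<Union>p\<in>F. cell V (fst p) (snd p))"
  proof
    fix x assume x: "x \<in> ball z (star_radius z)"
    obtain c l where "l \<in> L" "x \<in> cell V c l" by (rule cells_cover)
    moreover from this have "z \<in> cell V c l" using star_radius x by blast
    ultimately show "x \<in> (\<Union>p\<in>F. cell V (fst p) (snd p))" unfolding F_def by (intro UN_I[of "(c, l)"]) auto
  qed
  ultimately show ?thesis by (rule continuous_on_subset)
qed

definition cell_at :: "real \<times> real \<Rightarrow> 'c \<times> (real \<times> real)" where
  "cell_at x = (SOME p. snd p \<in> L \<and> x \<in> cell V (fst p) (snd p))"

lemma cell_at: "snd (cell_at x) \<in> L" "x \<in> cell V (fst (cell_at x)) (snd (cell_at x))"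
proof -
  obtain c l where "l \<in> L" "x \<in> cell V c l" by (rule cells_cover)
  then have "\<exists>p. snd p \<in> L \<and> x \<in> cell V (fst p) (snd p)" by (intro exI[of _ "(c, l)"]) simp
  from someI_ex[OF this] show "snd (cell_at x) \<in> L" "x \<in> cell V (fst (cell_at x)) (snd (cell_at x))"
    unfolding cell_at_def[symmetric] by auto
qed

text \<open>On cell boundaries \<open>field\<close> uses an arbitrary adjacent cell; along a segment this matters only
  at the finitely many \<open>crossings\<close>, which the fundamental theorem of calculus may ignore.\<close>

definition field :: "real \<times> real \<Rightarrow> real \<times> real" where
  "field x = u (fst (cell_at x)) (x - snd (cell_at x))"

definition flux_density :: "real \<times> real \<Rightarrow> real \<times> real \<Rightarrow> real \<Rightarrow> real" where
  "flux_density p q t = det2 (q - p) (field (p + t *\<^sub>R (q - p)))"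

text \<open>Parameters at which the segment from \<open>p\<close> to \<open>q\<close> meets, transversally, the line of an edge
  of a cell containing \<open>z\<close>.\<close>

definition crossings :: "real \<times> real \<Rightarrow> real \<times> real \<Rightarrow> real \<times> real \<Rightarrow> real set" where
  "crossings z p q = (\<Union>cl\<in>{(c, l). l \<in> L \<and> z \<in> cell V c l}. \<Union>i<3. \<Union>j<3.
      {s. det2 (vertex (fst cl) (snd cl) j - vertex (fst cl) (snd cl) i)
               (p + s *\<^sub>R (q - p) - vertex (fst cl) (snd cl) i) = 0 \<and>
          det2 (vertex (fst cl) (snd cl) j - vertex (fst cl) (snd cl) i) (q - p) \<noteq> 0})"

lemma finite_crossings: "finite (crossings z p q)"
proof -
  have line: "finite {s::real. det2 E (p + s *\<^sub>R d - w) = 0 \<and> det2 E d \<noteq> 0}" for E d w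
  proof (rule finite_subset)
    show "{s::real. det2 E (p + s *\<^sub>R d - w) = 0 \<and> det2 E d \<noteq> 0} \<subseteq> {- det2 E (p - w) / det2 E d}"
      by (auto simp: det2_def algebra_simps field_simps)
  qed simp
  then show ?thesis
    unfolding crossings_def by (intro finite_UN_I finite_cells_containing finite_lessThan line)
qed

lemma segment_near_stays_in_cell:
  assumes t: "t \<notin> crossings z p q" and l: "l \<in> L" and z: "z \<in> cell V c l"
    and t_cell: "p + t *\<^sub>R (q - p) \<in> cell V c l"
  obtains e where "e > 0" "\<And>s. \<bar>s - t\<bar> < e \<Longrightarrow> p + s *\<^sub>R (q - p) \<in> cell V c l"
proof -
  \<comment> \<open>each of the three sign conditions of \<open>mem_cell_iff_det2\<close> is affine in the parameter\<close>
  have edge: "\<exists>e>0. \<forall>s. \<bar>s - t\<bar> < e \<longrightarrow>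
      0 \<le> orientation c * det2 (vertex c l j - vertex c l i) (p + s *\<^sub>R (q - p) - vertex c l i)"
    if ij: "i < 3" "j < 3"
      and nonneg: "0 \<le> orientation c * det2 (vertex c l j - vertex c l i) (p + t *\<^sub>R (q - p) - vertex c l i)"
    for i j
  proof -
    define E where "E = vertex c l j - vertex c l i"
    define A where "A = orientation c * det2 E (p + t *\<^sub>R (q - p) - vertex c l i)"
    define B where "B = orientation c * det2 E (q - p)"
    have affine: "orientation c * det2 E (p + s *\<^sub>R (q - p) - vertex c l i) = A + (s - t) * B" for s
      unfolding A_def B_def by (simp add: det2_def algebra_simps)
    have "(B = 0 \<and> 0 \<le> A) \<or> 0 < A"
    proof (cases "det2 E (q - p) = 0")
      case False
      have "det2 E (p + t *\<^sub>R (q - p) - vertex c l i) \<noteq> 0"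
      proof
        assume "det2 E (p + t *\<^sub>R (q - p) - vertex c l i) = 0"
        then have "t \<in> crossings z p q" unfolding crossings_def
          by (intro UN_I[of "(c, l)"] UN_I[of i] UN_I[of j]) (use l z ij False in \<open>simp_all add: E_def\<close>)
        then show False using t by blast
      qed
      then show ?thesis using nonneg orientation_nonzero[of c] by (simp add: A_def E_def less_le)
    qed (use nonneg in \<open>simp add: A_def B_def E_def\<close>)
    then obtain e where "e > 0" "\<And>s. \<bar>s - t\<bar> < e \<Longrightarrow> 0 \<le> A + (s - t) * B"
      using eventually_nonneg_affine[where t = t] by blast
    then show ?thesis unfolding E_def[symmetric] affine by blast
  qed
  have signs: "0 \<le> orientation c * det2 (vertex c l 2 - vertex c l 1) (p + t *\<^sub>R (q - p) - vertex c l 1)"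
    "0 \<le> orientation c * det2 (vertex c l 0 - vertex c l 2) (p + t *\<^sub>R (q - p) - vertex c l 2)"
    "0 \<le> orientation c * det2 (vertex c l 1 - vertex c l 0) (p + t *\<^sub>R (q - p) - vertex c l 0)"
    using t_cell unfolding mem_cell_iff_det2 by auto
  obtain e1 e2 e3 where "e1 > 0" "e2 > 0" "e3 > 0"
    "\<And>s. \<bar>s - t\<bar> < e1 \<Longrightarrow> 0 \<le> orientation c * det2 (vertex c l 2 - vertex c l 1) (p + s *\<^sub>R (q - p) - vertex c l 1)"
    "\<And>s. \<bar>s - t\<bar> < e2 \<Longrightarrow> 0 \<le> orientation c * det2 (vertex c l 0 - vertex c l 2) (p + s *\<^sub>R (q - p) - vertex c l 2)"
    "\<And>s. \<bar>s - t\<bar> < e3 \<Longrightarrow> 0 \<le> orientation c * det2 (vertex c l 1 - vertex c l 0) (p + s *\<^sub>R (q - p) - vertex c l 0)"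
    using edge[of 1 2, OF _ _ signs(1)] edge[of 2 0, OF _ _ signs(2)] edge[of 0 1, OF _ _ signs(3)] by auto
  then show ?thesis
    by (intro that[of "min e1 (min e2 e3)"]) (simp_all add: mem_cell_iff_det2)
qed

lemma local_potential_along_segment_has_vector_derivative:
  assumes t: "t \<notin> crossings z p q" and near: "p + t *\<^sub>R (q - p) \<in> ball z (star_radius z)"
  shows "((\<lambda>s. local_potential z (p + s *\<^sub>R (q - p))) has_vector_derivative flux_density p q t) (at t)"
proof -
  define g where "g s = p + s *\<^sub>R (q - p)" for s :: real
  obtain c l where cl: "cell_at (g t) = (c, l)" by (metis surj_pair)
  have l: "l \<in> L" and in_cell: "g t \<in> cell V c l" using cell_at[of "g t"] cl by auto
  have z: "z \<in> cell V c l" using star_radius[OF l in_cell] near by (simp add: g_def)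
  obtain e where e: "e > 0" "\<And>s. \<bar>s - t\<bar> < e \<Longrightarrow> g s \<in> cell V c l"
    using segment_near_stays_in_cell[OF t l z] in_cell unfolding g_def by blast
  have "(g has_derivative (\<lambda>h. h *\<^sub>R (q - p))) (at t)"
    unfolding g_def[abs_def] by (rule derivative_eq_intros refl)+ simp
  from has_derivative_diff[OF has_derivative_compose[OF this has_derivative_cell_stream[of c l "g t"]]
      has_derivative_const[of "cell_stream c l z"]]
  have "((\<lambda>s. cell_stream c l (g s) - cell_stream c l z) has_derivative (\<lambda>h. h *\<^sub>R flux_density p q t)) (at t)"
    using cl by (simp add: flux_density_def field_def g_def det2_scaleR_left)
  then have "((\<lambda>s. local_potential z (g s)) has_derivative (\<lambda>h. h *\<^sub>R flux_density p q t)) (at t)"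
  proof (rule has_derivative_transform_within_open[OF _ open_ball[of t e]])
    fix s assume "s \<in> ball t e"
    then have "\<bar>s - t\<bar> < e" by (simp add: dist_real_def abs_minus_commute)
    then show "cell_stream c l (g s) - cell_stream c l z = local_potential z (g s)"
      using local_potential_eq[OF l z e(2)] by simp
  qed (use e in simp)
  then show ?thesis unfolding has_vector_derivative_def g_def .
qed

lemma flux_density_has_integral_local:
  assumes "s0 \<le> s1" and near: "\<And>s. s \<in> {s0..s1} \<Longrightarrow> p + s *\<^sub>R (q - p) \<in> ball z (star_radius z)"
  shows "(flux_density p q has_integral
           local_potential z (p + s1 *\<^sub>R (q - p)) - local_potential z (p + s0 *\<^sub>R (q - p))) {s0..s1}"
proof (rule fundamental_theorem_of_calculus_interior_strong[OF finite_crossings assms(1)])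
  fix s assume "s \<in> {s0<..<s1} - crossings z p q"
  then show "((\<lambda>s. local_potential z (p + s *\<^sub>R (q - p))) has_vector_derivative flux_density p q s) (at s)"
    using local_potential_along_segment_has_vector_derivative near by auto
next
  have "continuous_on {s0..s1} (\<lambda>s. p + s *\<^sub>R (q - p))" by (intro continuous_intros)
  then show "continuous_on {s0..s1} (\<lambda>s. local_potential z (p + s *\<^sub>R (q - p)))"
    by (rule continuous_on_compose2[OF continuous_on_local_potential]) (use near in auto)
qed

lemma flux_density_integrable: "flux_density p q integrable_on {0..1}"
proof -
  have "flux_density p q integrable_on cbox 0 1"
  proof (rule integrable_on_little_subintervals, intro ballI)
    fix x :: real
    define z where "z = p + x *\<^sub>R (q - p)"
    define d where "d = star_radius z / (norm (q - p) + 1)"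
    have np: "0 < norm (q - p) + 1" using norm_ge_zero[of "q - p"] by linarith
    have "d > 0" using star_radius_pos[of z] np by (simp add: d_def)
    moreover have "flux_density p q integrable_on cbox s0 s1"
      if "x \<in> cbox s0 s1" "cbox s0 s1 \<subseteq> ball x d" for s0 s1
    proof -
      have "p + s *\<^sub>R (q - p) \<in> ball z (star_radius z)" if s: "s \<in> {s0..s1}" for s
      proof -
        have "\<bar>s - x\<bar> < d" using \<open>cbox s0 s1 \<subseteq> ball x d\<close> s by (auto simp: dist_real_def subset_iff abs_minus_commute)
        have "z - (p + s *\<^sub>R (q - p)) = (x - s) *\<^sub>R (q - p)" by (simp add: z_def algebra_simps)
        then have "dist z (p + s *\<^sub>R (q - p)) = \<bar>s - x\<bar> * norm (q - p)"
          by (simp add: dist_norm abs_minus_commute)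
        also have "\<dots> < d * (norm (q - p) + 1)"
          using \<open>\<bar>s - x\<bar> < d\<close> np by (smt (verit) mult_left_mono abs_ge_zero mult_strict_right_mono)
        also have "\<dots> = star_radius z" using np by (simp add: d_def)
        finally show ?thesis by simp
      qed
      moreover have "s0 \<le> s1" using that(1) by simp
      ultimately show ?thesis using flux_density_has_integral_local[of s0 s1]
        by (metis box_real(2) has_integral_integrable)
    qed
    ultimately show "\<exists>d>0. \<forall>s0 s1. x \<in> cbox s0 s1 \<and> cbox s0 s1 \<subseteq> ball x d \<and> cbox s0 s1 \<subseteq> cbox 0 1 \<longrightarrow>
        flux_density p q integrable_on cbox s0 s1" by blast
  qed
  then show ?thesis by simp
qed

definition flux :: "real \<times> real \<Rightarrow> real \<times> real \<Rightarrow> real" where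
  "flux p q = integral {0..1} (flux_density p q)"

lemma flux_local:
  assumes "p \<in> ball z (star_radius z)" "q \<in> ball z (star_radius z)"
  shows "flux p q = local_potential z q - local_potential z p"
proof -
  have "p + s *\<^sub>R (q - p) \<in> ball z (star_radius z)" if "s \<in> {0..1}" for s
  proof -
    have "p + s *\<^sub>R (q - p) = (1 - s) *\<^sub>R p + s *\<^sub>R q" by (simp add: algebra_simps)
    then show ?thesis using convexD[OF convex_ball assms, of "1 - s" s] that by simp
  qed
  from flux_density_has_integral_local[of 0 1, OF _ this] show ?thesis
    unfolding flux_def by (simp add: integral_unique)
qed

lemma flux_swap: "flux q p = - flux p q"
proof -
  have "(flux_density p q has_integral flux p q) {0..1}"
    unfolding flux_def using flux_density_integrable by (simp add: integrable_integral)
  from has_integral_affine_substitution[OF this, of 1 1]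
  have "((\<lambda>x. flux_density p q (x + 1)) has_integral flux p q) {-1..0}"
    by (simp del: has_integral_reflect_real)
  from has_integral_neg[OF iffD2[OF has_integral_reflect_real this]]
  have "((\<lambda>x. - flux_density p q (- x + 1)) has_integral - flux p q) {0..1}"
    by simp
  moreover have "flux_density q p = (\<lambda>x. - flux_density p q (- x + 1))"
  proof
    fix x
    have "q + x *\<^sub>R (p - q) = p + (- x + 1) *\<^sub>R (q - p)" by (simp add: algebra_simps)
    moreover have "det2 (p - q) v = - det2 (q - p) v" for v by (simp add: det2_def algebra_simps)
    ultimately show "flux_density q p x = - flux_density p q (- x + 1)" unfolding flux_density_def by simp
  qed
  ultimately have "(flux_density q p has_integral - flux p q) {0..1}" by (simp only:)
  then show ?thesis unfolding flux_def[of q p] by (rule integral_unique)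
qed

lemma flux_midpoint: "flux p q = flux p (midpoint p q) + flux (midpoint p q) q"
proof -
  have int: "flux_density p q integrable_on {0..1}" by (rule flux_density_integrable)
  define I1 where "I1 = integral {0..1/2} (flux_density p q)"
  define I2 where "I2 = integral {1/2..1} (flux_density p q)"
  have I1: "(flux_density p q has_integral I1) {0..1/2}" unfolding I1_def
    by (rule integrable_integral, rule integrable_subinterval_real[OF int]) auto
  have I2: "(flux_density p q has_integral I2) {1/2..1}" unfolding I2_def
    by (rule integrable_integral, rule integrable_subinterval_real[OF int]) auto
  have "(flux_density p q has_integral I1 + I2) {0..1}" by (rule has_integral_combine[OF _ _ I1 I2]) auto
  then have sum: "flux p q = I1 + I2" unfolding flux_def by (rule integral_unique)
  \<comment> \<open>the two halves of the segment, each reparametrised over \<open>[0, 1]\<close>\<close>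
  have "midpoint p q - p = (1/2) *\<^sub>R (q - p)" "q - midpoint p q = (1/2) *\<^sub>R (q - p)"
    and mid: "midpoint p q = p + (1/2) *\<^sub>R (q - p)"
    by (simp_all add: midpoint_def prod_eq_iff field_simps)
  moreover have "p + x *\<^sub>R ((1/2) *\<^sub>R (q - p)) = p + (1/2 * x + 0) *\<^sub>R (q - p)"
    "midpoint p q + x *\<^sub>R ((1/2) *\<^sub>R (q - p)) = p + (1/2 * x + 1/2) *\<^sub>R (q - p)" for x
    unfolding mid by (simp_all add: algebra_simps)
  ultimately have "flux_density p (midpoint p q) = (\<lambda>x. 1/2 * flux_density p q (1/2 * x + 0))"
    "flux_density (midpoint p q) q = (\<lambda>x. 1/2 * flux_density p q (1/2 * x + 1/2))"
    unfolding flux_density_def by (simp_all only: det2_scaleR_left)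
  then have "(flux_density p (midpoint p q) has_integral I1) {0..1}"
    "(flux_density (midpoint p q) q has_integral I2) {0..1}"
    using has_integral_affine_substitution[OF I1, of "1/2" 0]
      has_integral_affine_substitution[OF I2, of "1/2" "1/2"]
    by (simp_all del: has_integral_reflect_real)
  then have "flux p (midpoint p q) = I1" "flux (midpoint p q) q = I2"
    unfolding flux_def by (simp_all add: integral_unique)
  with sum show ?thesis by simp
qed

definition potential :: "real \<times> real \<Rightarrow> real" where
  "potential x = flux 0 x"

lemma flux_eq_potential_diff: "flux p q = potential q - potential p"
proof -
  have "\<exists>r>0. \<exists>\<Phi>. \<forall>p\<in>ball z r. \<forall>q\<in>ball z r. flux p q = \<Phi> q - \<Phi> p" for z
    using star_radius_pos flux_local by blast
  from locally_exact_segment_functional[OF flux_swap flux_midpoint this] show ?thesis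
    unfolding potential_def .
qed

lemma potential_local:
  assumes "x \<in> ball z (star_radius z)" "y \<in> ball z (star_radius z)"
  shows "potential y - potential x = local_potential z y - local_potential z x"
  using flux_local[OF assms] by (simp add: flux_eq_potential_diff)

lemma continuous_potential: "continuous_on UNIV potential"
proof (rule continuous_at_imp_continuous_on, intro ballI)
  fix x :: "real \<times> real"
  have x: "x \<in> ball x (star_radius x)" using star_radius_pos[of x] by simp
  have "continuous_on (ball x (star_radius x)) (\<lambda>y. local_potential x y + (potential x - local_potential x x))"
    by (intro continuous_on_add continuous_on_local_potential continuous_on_const)
  then have "continuous_on (ball x (star_radius x)) potential"
    by (rule continuous_on_eq) (use potential_local[OF x] in \<open>simp add: algebra_simps\<close>)
  then show "isCont potential x" using continuous_on_interior[of "ball x (star_radius x)" potential x] x by simp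
qed

lemma potential_minus_cell_stream_const:
  assumes l: "l \<in> L" and x: "x \<in> cell V c l" and y: "y \<in> cell V c l"
  shows "potential x - cell_stream c l x = potential y - cell_stream c l y"
proof (rule connected_local_const[of "cell V c l" x y "\<lambda>x. potential x - cell_stream c l x"])
  show "\<forall>z\<in>cell V c l. eventually (\<lambda>w. potential z - cell_stream c l z = potential w - cell_stream c l w)
      (at z within cell V c l)"
  proof
    fix z assume z: "z \<in> cell V c l"
    have "potential z - cell_stream c l z = potential w - cell_stream c l w"
      if "w \<in> cell V c l" "w \<in> ball z (star_radius z)" for w
      using potential_local[OF _ that(2), of z] local_potential_eq[OF l z that(1)] local_potential_eq[OF l z z]
        star_radius_pos[of z] by simp
    then show "eventually (\<lambda>w. potential z - cell_stream c l z = potential w - cell_stream c l w)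
        (at z within cell V c l)"
      unfolding eventually_at using star_radius_pos[of z] by (auto simp: dist_commute)
  qed
qed (use x y convex_connected[OF convex_cell] in auto)

definition period :: "real \<times> real \<Rightarrow> real" where
  "period l = potential l - potential 0"

lemma potential_translate:
  assumes l: "l \<in> L"
  shows "potential (x + l) = potential x + period l"
proof -
  have "potential (x + l) - potential x = potential (0 + l) - potential 0"
  proof (rule cellwise_constant_imp_constant[where f = "\<lambda>x. potential (x + l) - potential x"])
    fix c l' x y assume l': "l' \<in> L" and x: "x \<in> cell V c l'" and y: "y \<in> cell V c l'"
    have "x + l \<in> cell V c (l' + l)" "y + l \<in> cell V c (l' + l)"
      using x y by (simp_all add: mem_cell_iff_translate)
    from potential_minus_cell_stream_const[OF lattice_add[OF l' l] this]
    have "potential (x + l) - cell_stream c l' x = potential (y + l) - cell_stream c l' y"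
      by (simp add: cell_stream_def)
    then show "potential (x + l) - potential x = potential (y + l) - potential y"
      using potential_minus_cell_stream_const[OF l' x y] by simp
  qed
  then show ?thesis unfolding period_def by simp
qed

lemma period_add: "l \<in> L \<Longrightarrow> l' \<in> L \<Longrightarrow> period (l + l') = period l + period l'"
  using potential_translate[of l' l] unfolding period_def by simp

lemma div_kernel_field_eq_rotgrad_plus_const:
  obtains v e where "u = (\<lambda>c x. v c x + e)" "rotgrad_range a b V k v"
proof -
  \<comment> \<open>the potential is periodic up to a linear function, whose rotated gradient is \<open>e\<close>\<close>
  obtain e where e: "\<And>l. l \<in> L \<Longrightarrow> period l = det2 l e"
    using additive_on_lattice_eq_det2[OF det2_basis_nonzero period_add] by blast
  define \<psi> where "\<psi> x = potential x - det2 x e" for x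
  define v where "v c x = u c x - e" for c x
  have "continuous_on UNIV \<psi>"
    unfolding \<psi>_def det2_def by (intro continuous_intros continuous_potential)
  moreover have "\<forall>l\<in>L. \<forall>x. \<psi> (x + l) = \<psi> x"
    using potential_translate e unfolding \<psi>_def by (simp add: det2_def algebra_simps)
  moreover have "\<exists>p. poly2 (k + 1) p \<and> (\<forall>x\<in>tri V c. \<psi> x = p x)
      \<and> (\<forall>x\<in>interior (tri V c). v c x = rotgrad \<psi> x)" for c
  proof -
    define p where "p x = stream c x + (potential (V c 0) - stream c (V c 0)) + det2 x (- e)" for x
    have "poly2 (k + 1) p"
      unfolding p_def by (intro poly2_add poly2_stream poly2_const poly2_det2) simp
    moreover have p_eq: "\<psi> x = p x" if "x \<in> tri V c" for x
    proof -
      have "V c 0 \<in> tri V c" by (simp add: tri_def hull_inc)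
      then show ?thesis
        using potential_minus_cell_stream_const[OF zero_in_lattice, of x c "V c 0"] that
        by (simp add: cell_def cell_stream_def \<psi>_def p_def det2_def algebra_simps)
    qed
    moreover have "v c x = rotgrad \<psi> x" if "x \<in> interior (tri V c)" for x
    proof -
      have "(p has_derivative (\<lambda>h. det2 h (u c x) + 0 + det2 h (- e))) (at x)"
        unfolding p_def det2_def
        by (intro has_derivative_add has_derivative_stream[unfolded det2_def] has_derivative_const)
          (auto intro!: derivative_eq_intros)
      then have "rotgrad p x = v c x"
        by (intro rotgrad_has_derivative_det2) (simp add: v_def det2_def algebra_simps)
      moreover have "rotgrad \<psi> x = rotgrad p x"
        using dx_dy_cong_open[OF open_interior that, of \<psi> p] p_eq interior_subset
        by (auto simp: rotgrad_def)
      ultimately show ?thesis by simp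
    qed
    ultimately show ?thesis by blast
  qed
  moreover have "dPk k v"
    unfolding dPk_def
  proof
    fix c
    have "poly2 k (\<lambda>z. fst (u c z))" "poly2 k (\<lambda>z. snd (u c z))"
      using div_kernel by (simp_all add: div_kernel_def dPk_def)
    from poly2_add[OF this(1) poly2_const[of k "- fst e"]] poly2_add[OF this(2) poly2_const[of k "- snd e"]]
    show "poly2 k (\<lambda>z. fst (v c z)) \<and> poly2 k (\<lambda>z. snd (v c z))" by (simp add: v_def)
  qed
  ultimately have "rotgrad_range a b V k v"
    unfolding rotgrad_range_def CGspace_def by metis
  moreover have "u = (\<lambda>c x. v c x + e)" by (simp add: v_def)
  ultimately show ?thesis using that by blast
qed

end

theorem proposition11:
  fixes a b :: "real \<times> real" and V :: "'c::finite \<Rightarrow> nat \<Rightarrow> real \<times> real" and k :: nat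
  assumes "torus_mesh a b V"
  shows "{u. div_kernel a b V k u} =
           {(\<lambda>c x. v c x + e) | v e. rotgrad_range a b V k v}
         \<and> (\<forall>e. rotgrad_range a b V k (const_field e) \<longrightarrow> e = 0)"
proof -
  interpret torus_triangulation a b V by unfold_locales (rule assms)
  have "{u. div_kernel a b V k u} = {(\<lambda>c x. v c x + e) | v e. rotgrad_range a b V k v}"
  proof (intro set_eqI iffI)
    fix u assume "u \<in> {u. div_kernel a b V k u}"
    then interpret torus_div_kernel_field a b V k u by unfold_locales simp
    obtain v e where "u = (\<lambda>c x. v c x + e)" "rotgrad_range a b V k v"
      by (rule div_kernel_field_eq_rotgrad_plus_const)
    then show "u \<in> {(\<lambda>c x. v c x + e) | v e. rotgrad_range a b V k v}" by blast
  qed (auto intro: rotgrad_range_plus_const_in_div_kernel)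
  with const_field_in_rotgrad_range_eq_0 show ?thesis by blast
qed

end
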